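(* Let $\Bbbk$ be algebraically closed, $R$ a commutative noetherian domain with field of fractions $K$ of transcendence degree $d=\operatorname{trdeg}(K/\Bbbk)<\infty$, $\sigma\in\operatorname{Aut}_\Bbbk(R)$ locally algebraic, $H,J$ ideals of $R$, and $B=R(t,\sigma,H,J)$. Then the Gelfand–Kirillov dimension of $B$ is $d+1$.
   Context: $\Bbbk$ is a field; all algebras are associative unital $\Bbbk$-algebras. For an algebra $R$ and $\sigma\in\operatorname{Aut}_\Bbbk(R)$, $R[t,t^{-1};\sigma]$ is the skew Laurent ring: generated over $R$ by $t,t^{-1}$ with $tt^{-1}=t^{-1}t=1$ and $t^{\pm1}r=\sigma^{\pm1}(r)t^{\pm1}$ for $r\in R$. Given two-sided ideals $H,J$ of $R$, set $I^{(0)}=R$, $I^{(n)}=J\sigma(J)\cdots\sigma^{n-1}(J)$ for $n\ge1$, and $I^{(n)}=\sigma^{-1}(H)\sigma^{-2}(H)\cdots\sigma^{n}(H)$ for $n\le-1$; it is assumed throughout that $I^{(n)}\neq0$ for all $n\in\mathbb Z$. The Bell–Rogalski (BR) algebra is $R(t,\sigma,H,J)=\bigoplus_{n\in\mathbb Z}I^{(n)}t^n\subseteq R[t,t^{-1};\sigma]$. An automorphism $\sigma$ is locally algebraic if for each $r\in R$ the set $\{\sigma^n(r):n\in\mathbb Z\}$ is contained in a finite-dimensional $\Bbbk$-subspace of $R$. *)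

theory Defs
  imports Main "HOL-Computational_Algebra.Polynomial" "HOL-Computational_Algebra.Fraction_Field"
    "HOL-Library.Function_Algebras" "HOL-Library.Extended_Real" "HOL-Library.Liminf_Limsup"
begin

definition alg_closed :: "'k::field itself \<Rightarrow> bool" where
  "alg_closed (T::'k itself) \<longleftrightarrow> (\<forall>p::'k poly. degree p > 0 \<longrightarrow> (\<exists>x. poly p x = 0))"

text \<open>A k-algebra structure on a ring 'r is given by a unital ring homomorphism
  iota : k -> R (structure map); the scalar action is c.x = iota c * x.\<close>
definition kalg_hom :: "('k::field \<Rightarrow> 'r::comm_ring_1) \<Rightarrow> bool" where
  "kalg_hom \<iota> \<longleftrightarrow> \<iota> 1 = 1 \<and> (\<forall>a b. \<iota> (a + b) = \<iota> a + \<iota> b) \<and> (\<forall>a b. \<iota> (a * b) = \<iota> a * \<iota> b)"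

definition kscale :: "('k::field \<Rightarrow> 'r::comm_ring_1) \<Rightarrow> 'k \<Rightarrow> 'r \<Rightarrow> 'r" where
  "kscale \<iota> c x = \<iota> c * x"

definition is_ideal :: "'r::comm_ring_1 set \<Rightarrow> bool" where
  "is_ideal I \<longleftrightarrow> 0 \<in> I \<and> (\<forall>x\<in>I. \<forall>y\<in>I. x + y \<in> I) \<and> (\<forall>r. \<forall>x\<in>I. r * x \<in> I)"

definition noetherian_ring :: "'r::comm_ring_1 itself \<Rightarrow> bool" where
  "noetherian_ring (T::'r itself) \<longleftrightarrow>
     (\<forall>C::nat \<Rightarrow> 'r set. (\<forall>n. is_ideal (C n)) \<and> (\<forall>n. C n \<subseteq> C (Suc n)) \<longrightarrow> (\<exists>m. \<forall>n\<ge>m. C n = C m))"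

text \<open>Monomials are exponent vectors e : F -> nat
  supported in S.\<close>
definition alg_indep :: "('k::field \<Rightarrow> 'f::field) \<Rightarrow> 'f set \<Rightarrow> bool" where
  "alg_indep \<phi> S \<longleftrightarrow> finite S \<and>
     (\<forall>(E::('f \<Rightarrow> nat) set) (c::('f \<Rightarrow> nat) \<Rightarrow> 'k).
        finite E \<and> (\<forall>e\<in>E. \<forall>x. x \<notin> S \<longrightarrow> e x = 0) \<and>
        (\<Sum>e\<in>E. \<phi> (c e) * (\<Prod>x\<in>S. x ^ e x)) = 0
        \<longrightarrow> (\<forall>e\<in>E. c e = 0))"

definition trdeg_eq :: "('k::field \<Rightarrow> 'f::field) \<Rightarrow> nat \<Rightarrow> bool" where
  "trdeg_eq \<phi> d \<longleftrightarrow> (\<exists>S. alg_indep \<phi> S \<and> card S = d \<and> (\<forall>y. y \<notin> S \<longrightarrow> \<not> alg_indep \<phi> (insert y S)))"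

definition frac_emb :: "('k::field \<Rightarrow> 'r::idom) \<Rightarrow> 'k \<Rightarrow> 'r fract" where
  "frac_emb \<iota> c = Fract (\<iota> c) 1"

definition k_aut :: "('k::field \<Rightarrow> 'r::comm_ring_1) \<Rightarrow> ('r \<Rightarrow> 'r) \<Rightarrow> bool" where
  "k_aut \<iota> \<sigma> \<longleftrightarrow> bij \<sigma> \<and> \<sigma> 1 = 1 \<and> (\<forall>a b. \<sigma> (a + b) = \<sigma> a + \<sigma> b)
     \<and> (\<forall>a b. \<sigma> (a * b) = \<sigma> a * \<sigma> b) \<and> (\<forall>c x. \<sigma> (\<iota> c * x) = \<iota> c * \<sigma> x)"

definition zpow :: "('r \<Rightarrow> 'r) \<Rightarrow> int \<Rightarrow> 'r \<Rightarrow> 'r" where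
  "zpow \<sigma> n = (if 0 \<le> n then \<sigma> ^^ nat n else inv \<sigma> ^^ nat (- n))"

definition locally_algebraic :: "('k::field \<Rightarrow> 'r::comm_ring_1) \<Rightarrow> ('r \<Rightarrow> 'r) \<Rightarrow> bool" where
  "locally_algebraic \<iota> \<sigma> \<longleftrightarrow>
     (\<forall>r. \<exists>F. finite F \<and> (\<forall>n::int. zpow \<sigma> n r \<in> module.span (kscale \<iota>) F))"

text \<open>An element sum_n f(n) t^n is represented by its finitely supported coefficient
  function f : int -> R.  Addition is pointwise; the product uses
  (a t^i)(b t^j) = a sigma^i(b) t^(i+j).\<close>
definition sl_scale :: "('k::field \<Rightarrow> 'r::comm_ring_1) \<Rightarrow> 'k \<Rightarrow> (int \<Rightarrow> 'r) \<Rightarrow> (int \<Rightarrow> 'r)" where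
  "sl_scale \<iota> c f = (\<lambda>n. \<iota> c * f n)"

definition sl_mult :: "('r::comm_ring_1 \<Rightarrow> 'r) \<Rightarrow> (int \<Rightarrow> 'r) \<Rightarrow> (int \<Rightarrow> 'r) \<Rightarrow> (int \<Rightarrow> 'r)" where
  "sl_mult \<sigma> f g = (\<lambda>n. \<Sum>i\<in>{i. f i \<noteq> 0}. f i * zpow \<sigma> i (g (n - i)))"

definition sl_one :: "int \<Rightarrow> 'r::comm_ring_1" where
  "sl_one = (\<lambda>n. if n = 0 then 1 else 0)"

definition skew_laurent :: "(int \<Rightarrow> 'r::comm_ring_1) set" where
  "skew_laurent = {f. finite {n. f n \<noteq> 0}}"

definition ideal_prod :: "'r::comm_ring_1 set list \<Rightarrow> 'r set" where
  "ideal_prod Is = {sum_list (map prod_list xss) | xss. \<forall>xs\<in>set xss. list_all2 (\<in>) xs Is}"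

definition BR_I :: "('r::comm_ring_1 \<Rightarrow> 'r) \<Rightarrow> 'r set \<Rightarrow> 'r set \<Rightarrow> int \<Rightarrow> 'r set" where
  "BR_I \<sigma> H J n =
    (if n = 0 then UNIV
     else if 0 < n then ideal_prod (map (\<lambda>i. zpow \<sigma> (int i) ` J) [0..<nat n])
     else ideal_prod (map (\<lambda>i. zpow \<sigma> (- int i) ` H) [1..<nat (- n) + 1]))"

definition BR_alg :: "('r::comm_ring_1 \<Rightarrow> 'r) \<Rightarrow> 'r set \<Rightarrow> 'r set \<Rightarrow> (int \<Rightarrow> 'r) set" where
  "BR_alg \<sigma> H J = {f \<in> skew_laurent. \<forall>n. f n \<in> BR_I \<sigma> H J n}"

definition pow_space :: "('k::field \<Rightarrow> 'a::ab_group_add \<Rightarrow> 'a) \<Rightarrow> ('a \<Rightarrow> 'a \<Rightarrow> 'a) \<Rightarrow> 'a \<Rightarrow> 'a set \<Rightarrow> nat \<Rightarrow> 'a set" where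
  "pow_space sc mul one V m = module.span sc {foldr mul xs one | xs. length xs = m \<and> set xs \<subseteq> V}"

definition GKdim :: "('k::field \<Rightarrow> 'a::ab_group_add \<Rightarrow> 'a) \<Rightarrow> ('a \<Rightarrow> 'a \<Rightarrow> 'a) \<Rightarrow> 'a \<Rightarrow> 'a set \<Rightarrow> ereal" where
  "GKdim sc mul one A =
     (SUP F \<in> {F. finite F \<and> F \<subseteq> A}.
        limsup (\<lambda>m. ereal (ln (real (vector_space.dim sc (pow_space sc mul one (module.span sc (insert one F)) m)))
                          / ln (real m))))"

end

theory Submission
  imports Defs "HOL-Computational_Algebra.Polynomial_Factorial" "HOL-Library.FuncSet"
begin

text \<open>
  Upper bound.  Let \<open>V\<close> be spanned by \<open>1\<close> and finitely many elements of \<open>R[t, t\<inverse>; \<sigma>]\<close>.  Their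
  coefficients lie in a \<open>\<sigma>\<close>-stable subspace \<open>W\<close>, which is finite-dimensional because \<open>\<sigma>\<close> is
  locally algebraic, and their degrees lie in \<open>[-N, N]\<close>.  So \<open>V^m\<close> consists of Laurent polynomials
  of degree at most \<open>N m\<close> whose coefficients are sums of products of \<open>m\<close> elements of a finite set
  \<open>G \<subseteq> R\<close>.  Let \<open>S\<close> be a transcendence basis of \<open>Frac R\<close>, of size \<open>d\<close>.  Each element of \<open>G\<close> is
  algebraic over \<open>k(S)\<close>; multiplying by a fixed nonzero \<open>C\<close> that clears the leading coefficients
  of these relations, \<open>C^m\<close> times such a product lies in the span of \<open>O(m^d)\<close> elements of
  \<open>Frac R\<close>.  Multiplication by \<open>C^m\<close> is injective, hence \<open>dim V^m = O(m^(d+1))\<close>.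

  Lower bound.  Write each \<open>x \<in> S\<close> as \<open>a x / b\<close> with \<open>a x, b \<in> R\<close>, and pick \<open>u \<noteq> 0\<close> in \<open>I^(1)\<close>.
  For \<open>m \<ge> (d + 1) q\<close> the elements \<open>M (u t)^n\<close>, with \<open>n \<le> q\<close> and \<open>M\<close> a monomial in the \<open>a x\<close> of
  degree at most \<open>q\<close> in each variable, padded by powers of \<open>b\<close> to total degree \<open>d q\<close>, lie in \<open>V^m\<close>
  for a suitable \<open>V\<close>.  Since \<open>S\<close> is algebraically independent they are linearly independent, so
  \<open>dim V^m \<ge> (q + 1)^(d+1)\<close>.
\<close>

definition kalg_mono :: "('k::field \<Rightarrow> 'r::comm_ring_1) \<Rightarrow> ('r \<Rightarrow> 'r) \<Rightarrow> bool" where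
  "kalg_mono \<iota> f \<longleftrightarrow> inj f \<and> f 1 = 1 \<and> (\<forall>a b. f (a + b) = f a + f b)
     \<and> (\<forall>a b. f (a * b) = f a * f b) \<and> (\<forall>c x. f (\<iota> c * x) = \<iota> c * f x)"

lemma kalg_hom_zero: "kalg_hom \<phi> \<Longrightarrow> \<phi> 0 = 0"
  unfolding kalg_hom_def by (metis add_cancel_right_right)

lemma kalg_hom_uminus_one: "kalg_hom \<phi> \<Longrightarrow> \<phi> (- 1) = - 1"
proof -
  assume h: "kalg_hom \<phi>"
  then have "\<phi> (- 1) + \<phi> 1 = 0" unfolding kalg_hom_def by (metis add.left_inverse kalg_hom_zero[OF h])
  then show ?thesis using h by (simp add: kalg_hom_def eq_neg_iff_add_eq_0)
qed

lemma vector_space_kscale: "kalg_hom (\<phi>::'k::field \<Rightarrow> 'a::comm_ring_1) \<Longrightarrow> vector_space (kscale \<phi>)"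
  unfolding vector_space_def kscale_def kalg_hom_def by (auto simp: algebra_simps)

lemma vector_space_sl_scale: "kalg_hom (\<phi>::'k::field \<Rightarrow> 'a::comm_ring_1) \<Longrightarrow> vector_space (sl_scale \<phi>)"
  unfolding vector_space_def sl_scale_def kalg_hom_def by (auto simp: algebra_simps fun_eq_iff)

lemma frac_emb_conv_to_fract: "frac_emb \<iota> c = to_fract (\<iota> c)"
  by (simp add: frac_emb_def to_fract_def)

lemma to_fract_power [simp]: "to_fract (x ^ n) = to_fract x ^ n"
  by (induction n) simp_all

lemma to_fract_prod_list: "to_fract (prod_list xs) = prod_list (map to_fract xs)"
  by (induction xs) simp_all

lemma to_fract_prod [simp]: "to_fract (prod f A) = (\<Prod>x\<in>A. to_fract (f x))"
  by (induction A rule: infinite_finite_induct) simp_all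

lemma kalg_hom_frac_emb: "kalg_hom \<iota> \<Longrightarrow> kalg_hom (frac_emb \<iota>)"
  unfolding kalg_hom_def frac_emb_conv_to_fract by simp

lemma kalg_mono_zero: "kalg_mono \<iota> f \<Longrightarrow> f 0 = 0"
  unfolding kalg_mono_def by (metis add_cancel_right_right)

lemma kalg_mono_eq_zero_iff: "kalg_mono \<iota> f \<Longrightarrow> f x = 0 \<longleftrightarrow> x = 0"
  using kalg_mono_zero[of \<iota> f] unfolding kalg_mono_def by (metis injD)

lemma kalg_mono_prod_list:
  assumes "kalg_mono \<iota> f"
  shows "f (prod_list xs) = prod_list (map f xs)"
proof -
  have "f 1 = 1" "\<And>a b. f (a * b) = f a * f b" using assms by (auto simp: kalg_mono_def)
  then show ?thesis by (induction xs) simp_all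
qed

lemma kalg_mono_id: "kalg_mono \<iota> id"
  unfolding kalg_mono_def by auto

lemma kalg_mono_comp:
  assumes "kalg_mono \<iota> f" "kalg_mono \<iota> g"
  shows "kalg_mono \<iota> (f \<circ> g)"
proof -
  have "\<forall>c x. f (g (\<iota> c * x)) = \<iota> c * f (g x)" using assms unfolding kalg_mono_def by metis
  then show ?thesis using assms unfolding kalg_mono_def by (simp add: inj_compose)
qed

lemma kalg_mono_funpow: "kalg_mono \<iota> f \<Longrightarrow> kalg_mono \<iota> (f ^^ n)"
  by (induction n) (auto simp: kalg_mono_id kalg_mono_comp)

lemma k_aut_imp_kalg_mono: "k_aut \<iota> \<sigma> \<Longrightarrow> kalg_mono \<iota> \<sigma>"
  unfolding k_aut_def kalg_mono_def by (auto simp: bij_def)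

lemma k_aut_inv_kalg_mono:
  assumes "k_aut \<iota> \<sigma>"
  shows "kalg_mono \<iota> (inv \<sigma>)"
proof -
  have "bij \<sigma>" using assms by (simp add: k_aut_def)
  then have s: "\<sigma> (inv \<sigma> x) = x" and i: "inv \<sigma> (\<sigma> x) = x" for x
    by (simp_all add: bij_is_surj surj_f_inv_f bij_is_inj)
  have h: "kalg_mono \<iota> \<sigma>" using assms by (rule k_aut_imp_kalg_mono)
  show ?thesis unfolding kalg_mono_def
  proof (intro conjI allI)
    show "inj (inv \<sigma>)" using \<open>bij \<sigma>\<close> by (simp add: bij_imp_bij_inv bij_is_inj)
    show "inv \<sigma> 1 = 1" using h i unfolding kalg_mono_def by metis
    show "inv \<sigma> (a + b) = inv \<sigma> a + inv \<sigma> b" for a b using h s i unfolding kalg_mono_def by metis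
    show "inv \<sigma> (a * b) = inv \<sigma> a * inv \<sigma> b" for a b using h s i unfolding kalg_mono_def by metis
    show "inv \<sigma> (\<iota> c * x) = \<iota> c * inv \<sigma> x" for c x using h s i unfolding kalg_mono_def by metis
  qed
qed

lemma kalg_mono_zpow:
  assumes "k_aut \<iota> \<sigma>"
  shows "kalg_mono \<iota> (zpow \<sigma> n)"
  by (simp add: zpow_def kalg_mono_funpow k_aut_imp_kalg_mono[OF assms] k_aut_inv_kalg_mono[OF assms])

lemma zpow_0 [simp]: "zpow \<sigma> 0 = id"
  by (simp add: zpow_def)

lemma zpow_1 [simp]: "zpow \<sigma> 1 = \<sigma>"
  by (simp add: zpow_def)

lemma zpow_succ:
  assumes "bij \<sigma>"
  shows "zpow \<sigma> (n + 1) x = \<sigma> (zpow \<sigma> n x)"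
proof (cases "0 \<le> n")
  case True
  then have "nat (n + 1) = Suc (nat n)" by simp
  then show ?thesis using True by (simp add: zpow_def)
next
  case False
  then have "nat (- n) = Suc (nat (- (n + 1)))" by simp
  moreover have "\<sigma> (inv \<sigma> y) = y" for y
    using assms by (simp add: bij_is_surj surj_f_inv_f)
  ultimately show ?thesis using False by (simp add: zpow_def)
qed

lemma zpow_pred:
  assumes "bij \<sigma>"
  shows "zpow \<sigma> (n - 1) x = inv \<sigma> (zpow \<sigma> n x)"
  using zpow_succ[OF assms, of "n - 1" x] assms by (simp add: bij_is_inj)

lemma zpow_zpow:
  assumes "bij \<sigma>"
  shows "zpow \<sigma> i (zpow \<sigma> j x) = zpow \<sigma> (i + j) x"
proof (induction i rule: int_induct[where k = 0])
  case (step1 i)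
  then have "zpow \<sigma> (i + 1) (zpow \<sigma> j x) = zpow \<sigma> (i + j + 1) x"
    by (simp only: zpow_succ[OF assms])
  then show ?case by (simp add: ac_simps)
next
  case (step2 i)
  then have "zpow \<sigma> (i - 1) (zpow \<sigma> j x) = zpow \<sigma> (i + j - 1) x"
    by (simp only: zpow_pred[OF assms])
  then show ?case by (simp add: algebra_simps)
qed simp

definition sl_monom :: "'r::zero \<Rightarrow> int \<Rightarrow> int \<Rightarrow> 'r" where
  "sl_monom a i = (\<lambda>n. if n = i then a else 0)"

lemma sl_one_eq_monom: "sl_one = sl_monom 1 0"
  unfolding sl_one_def sl_monom_def by auto

lemma sum_fun_apply: "(\<Sum>x\<in>A. f x) n = (\<Sum>x\<in>A. f x n)"
  by (induction A rule: infinite_finite_induct) simp_all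

lemma sl_mult_monom_left: "sl_mult \<sigma> (sl_monom a i) g = (\<lambda>n. a * zpow \<sigma> i (g (n - i)))"
proof (cases "a = 0")
  case False
  then have "{j. sl_monom a i j \<noteq> 0} = {i}" by (auto simp: sl_monom_def)
  then show ?thesis by (simp add: sl_mult_def sl_monom_def)
qed (simp add: sl_mult_def sl_monom_def)

lemma sl_mult_monom:
  assumes "k_aut \<iota> \<sigma>"
  shows "sl_mult \<sigma> (sl_monom a i) (sl_monom b j) = sl_monom (a * zpow \<sigma> i b) (i + j)"
  unfolding sl_mult_monom_left using kalg_mono_zero[OF kalg_mono_zpow[OF assms]]
  by (auto simp: sl_monom_def fun_eq_iff)

lemma zero_mem_BR_I: "0 \<in> BR_I \<sigma> H J n"
  unfolding BR_I_def ideal_prod_def by (auto intro!: exI[of _ "[]"])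

lemma sl_monom_mem_BR_alg: "a \<in> BR_I \<sigma> H J i \<Longrightarrow> sl_monom a i \<in> BR_alg \<sigma> H J"
  unfolding BR_alg_def skew_laurent_def sl_monom_def
  by (auto simp: zero_mem_BR_I intro: finite_subset[of _ "{i}"])

lemma (in vector_space) pow_space_subset:
  assumes "\<And>m. subspace (Q m)" and "one \<in> Q 0"
    and "\<And>x y k. x \<in> V \<Longrightarrow> y \<in> Q k \<Longrightarrow> mul x y \<in> Q (Suc k)"
  shows "pow_space scale mul one V m \<subseteq> Q m"
proof -
  have "foldr mul xs one \<in> Q (length xs)" if "set xs \<subseteq> V" for xs
    using that by (induction xs) (simp_all add: assms(2,3))
  then show ?thesis
    unfolding pow_space_def by (intro span_minimal assms(1)) auto
qed

lemma (in Vector_Spaces.linear) finite_basis_if_inj_image_spanned: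
  assumes "inj f" and "f ` V \<subseteq> vs2.span W" and "finite W"
  obtains B where "finite B" "B \<subseteq> V" "vs1.independent B" "V \<subseteq> vs1.span B" "card B \<le> card W"
proof -
  obtain B where B: "B \<subseteq> V" "vs1.independent B" "V \<subseteq> vs1.span B" "card B = vs1.dim V"
    by (rule vs1.basis_exists)
  have "vs2.independent (f ` B)"
    by (rule independent_inj_image[OF B(2) assms(1)])
  moreover have "f ` B \<subseteq> vs2.span W"
    using B(1) assms(2) by blast
  ultimately have "finite (f ` B) \<and> card (f ` B) \<le> card W"
    by (intro vs2.independent_span_bound assms(3))
  moreover have "inj_on f B"
    using assms(1) by (simp add: inj_on_def)
  ultimately have "finite B" "card B \<le> card W"
    by (simp_all add: finite_image_iff card_image)
  with B that show ?thesis by blast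
qed

context
  fixes \<phi> :: "'k::field \<Rightarrow> 'a::comm_ring_1"
  assumes h\<phi>: "kalg_hom \<phi>"
begin

interpretation V: vector_space "kscale \<phi>" by (rule vector_space_kscale[OF h\<phi>])

lemma span_mult_left:
  assumes "\<forall>b\<in>Y. a * b \<in> V.span Z" and "b \<in> V.span Y"
  shows "a * b \<in> V.span Z"
  using assms(2)
proof (induction b rule: V.span_induct_alt)
  case (step c x y)
  have "a * (kscale \<phi> c x + y) = kscale \<phi> c (a * x) + a * y"
    by (simp add: kscale_def algebra_simps)
  then show ?case using step assms(1) by (simp add: V.span_add V.span_scale)
qed (simp add: V.span_zero)

lemma span_mult:
  assumes "\<forall>a\<in>X. \<forall>b\<in>Y. a * b \<in> V.span Z" and "a \<in> V.span X" and "b \<in> V.span Y"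
  shows "a * b \<in> V.span Z"
proof -
  have "\<forall>a\<in>X. a * b \<in> V.span Z"
    using assms(1,3) span_mult_left by blast
  then have "\<forall>a\<in>X. b * a \<in> V.span Z" by (simp add: mult.commute)
  then have "b * a \<in> V.span Z" using span_mult_left assms(2) by blast
  then show ?thesis by (simp add: mult.commute)
qed

lemma span_additive_image:
  assumes "\<forall>a b. g (a + b) = g a + g b" and "\<forall>c x. g (\<phi> c * x) = \<phi> c * g x"
    and "x \<in> V.span A"
  shows "g x \<in> V.span (g ` A)"
  using assms(3)
proof (induction x rule: V.span_induct_alt)
  case base
  have "g 0 = 0" using assms(1) by (metis add_cancel_right_right)
  then show ?case by (simp add: V.span_zero)
next
  case (step c x y)
  have "g (kscale \<phi> c x + y) = kscale \<phi> c (g x) + g y" using assms(1,2) by (simp add: kscale_def)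
  then show ?case using step by (simp add: V.span_add V.span_scale V.span_base)
qed

end

definition power_prod :: "'a::comm_ring_1 set \<Rightarrow> ('a \<Rightarrow> nat) \<Rightarrow> 'a" where
  "power_prod S \<gamma> = (\<Prod>x\<in>S. x ^ \<gamma> x)"

definition box_exps :: "'a set \<Rightarrow> nat \<Rightarrow> ('a \<Rightarrow> nat) set" where
  "box_exps S q = {\<gamma>. (\<forall>x. x \<notin> S \<longrightarrow> \<gamma> x = 0) \<and> (\<forall>x\<in>S. \<gamma> x \<le> q)}"

definition degree_le_exps :: "'a set \<Rightarrow> nat \<Rightarrow> ('a \<Rightarrow> nat) set" where
  "degree_le_exps S D = {\<gamma>. (\<forall>x. x \<notin> S \<longrightarrow> \<gamma> x = 0) \<and> sum \<gamma> S \<le> D}"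

lemma power_prod_add: "power_prod S (\<gamma> + \<delta>) = power_prod S \<gamma> * power_prod S \<delta>"
  unfolding power_prod_def by (simp add: power_add prod.distrib)

lemma power_prod_zero [simp]: "power_prod S (\<lambda>_. 0) = 1"
  unfolding power_prod_def by simp

lemma box_exps_eq_image_PiE:
  "box_exps S q = (\<lambda>f x. if x \<in> S then f x else 0) ` PiE S (\<lambda>_. {..q})"
proof (intro set_eqI iffI)
  fix \<gamma> assume \<gamma>: "\<gamma> \<in> box_exps S q"
  show "\<gamma> \<in> (\<lambda>f x. if x \<in> S then f x else 0) ` PiE S (\<lambda>_. {..q})"
  proof (rule image_eqI[of _ _ "restrict \<gamma> S"])
    show "\<gamma> = (\<lambda>x. if x \<in> S then restrict \<gamma> S x else 0)"
      using \<gamma> by (auto simp: box_exps_def)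
  qed (use \<gamma> in \<open>auto simp: box_exps_def\<close>)
qed (auto simp: box_exps_def)

lemma
  assumes "finite S"
  shows finite_box_exps: "finite (box_exps S q)"
    and card_box_exps: "card (box_exps S q) = (q + 1) ^ card S"
proof -
  have "inj_on (\<lambda>f x. if x \<in> S then f x else 0) (PiE S (\<lambda>_. {..q}))"
  proof (rule inj_onI)
    fix f g assume f: "f \<in> PiE S (\<lambda>_. {..q})" and g: "g \<in> PiE S (\<lambda>_. {..q})"
      and eq: "(\<lambda>x. if x \<in> S then f x else 0) = (\<lambda>x. if x \<in> S then g x else 0)"
    show "f = g"
    proof (rule PiE_ext[OF f g])
      show "f x = g x" if "x \<in> S" for x using fun_cong[OF eq, of x] that by simp
    qed
  qed
  then show "card (box_exps S q) = (q + 1) ^ card S"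
    by (simp add: box_exps_eq_image_PiE card_image card_PiE assms)
  show "finite (box_exps S q)"
    by (simp add: box_exps_eq_image_PiE assms finite_PiE)
qed

lemma degree_le_exps_subset_box: "finite S \<Longrightarrow> degree_le_exps S D \<subseteq> box_exps S D"
  unfolding degree_le_exps_def box_exps_def by (auto intro: order_trans[OF member_le_sum])

lemma
  assumes "finite S"
  shows finite_degree_le_exps: "finite (degree_le_exps S D)"
    and card_degree_le_exps: "card (degree_le_exps S D) \<le> (D + 1) ^ card S"
  using degree_le_exps_subset_box[OF assms, of D] finite_box_exps[OF assms, of D]
    card_box_exps[OF assms, of D]
  by (auto intro: finite_subset dest: card_mono)

lemma add_mem_degree_le_exps:
  "\<gamma> \<in> degree_le_exps S a \<Longrightarrow> \<delta> \<in> degree_le_exps S b \<Longrightarrow> \<gamma> + \<delta> \<in> degree_le_exps S (a + b)"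
  unfolding degree_le_exps_def by (auto simp: sum.distrib)

lemma degree_le_exps_mono: "a \<le> b \<Longrightarrow> degree_le_exps S a \<subseteq> degree_le_exps S b"
  unfolding degree_le_exps_def by auto

lemma zero_mem_degree_le_exps: "(\<lambda>_. 0) \<in> degree_le_exps S D"
  unfolding degree_le_exps_def by auto

definition polys_le :: "('k::field \<Rightarrow> 'a::comm_ring_1) \<Rightarrow> 'a set \<Rightarrow> nat \<Rightarrow> 'a set" where
  "polys_le \<phi> S D = module.span (kscale \<phi>) (power_prod S ` degree_le_exps S D)"

definition prod_span :: "('k::field \<Rightarrow> 'a::comm_ring_1) \<Rightarrow> 'a set \<Rightarrow> nat \<Rightarrow> 'a set" where
  "prod_span \<phi> W k = module.span (kscale \<phi>) {prod_list xs | xs. length xs = k \<and> set xs \<subseteq> W}"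

definition sl_box :: "nat \<Rightarrow> 'a::zero set \<Rightarrow> (int \<Rightarrow> 'a) set" where
  "sl_box N P = {f. (\<forall>n. f n \<noteq> 0 \<longrightarrow> \<bar>n\<bar> \<le> int N) \<and> (\<forall>n. f n \<in> P)}"

context
  fixes \<phi> :: "'k::field \<Rightarrow> 'a::comm_ring_1"
  assumes h\<phi>: "kalg_hom \<phi>"
begin

interpretation V: vector_space "kscale \<phi>" by (rule vector_space_kscale[OF h\<phi>])
interpretation VF: vector_space "sl_scale \<phi>" by (rule vector_space_sl_scale[OF h\<phi>])

lemma polys_le_mult: "a \<in> polys_le \<phi> S p \<Longrightarrow> b \<in> polys_le \<phi> S q \<Longrightarrow> a * b \<in> polys_le \<phi> S (p + q)"
  unfolding polys_le_def
  by (rule span_mult[OF h\<phi>]) (auto intro!: V.span_base simp: power_prod_add[symmetric] add_mem_degree_le_exps)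

lemma polys_le_mono: "p \<le> q \<Longrightarrow> polys_le \<phi> S p \<subseteq> polys_le \<phi> S q"
  unfolding polys_le_def by (intro V.span_mono image_mono degree_le_exps_mono)

lemma one_mem_polys_le: "1 \<in> polys_le \<phi> S p"
  unfolding polys_le_def using zero_mem_degree_le_exps
  by (metis V.span_base image_eqI power_prod_zero)

lemma power_prod_mem_polys_le: "\<gamma> \<in> degree_le_exps S p \<Longrightarrow> power_prod S \<gamma> \<in> polys_le \<phi> S p"
  unfolding polys_le_def by (simp add: V.span_base)

lemma lincomb_mem_polys_le:
  assumes "\<And>e. e \<in> E \<Longrightarrow> \<gamma> e \<in> degree_le_exps S p"
  shows "(\<Sum>e\<in>E. \<phi> (c e) * power_prod S (\<gamma> e)) \<in> polys_le \<phi> S p"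
  unfolding polys_le_def
proof (rule V.span_sum)
  fix e assume "e \<in> E"
  then have "power_prod S (\<gamma> e) \<in> V.span (power_prod S ` degree_le_exps S p)"
    using assms by (auto intro: V.span_base)
  from V.span_scale[OF this, of "c e"]
  show "\<phi> (c e) * power_prod S (\<gamma> e) \<in> V.span (power_prod S ` degree_le_exps S p)"
    by (simp add: kscale_def)
qed

lemma prod_mem_polys_le:
  assumes "finite G" and "\<And>g. g \<in> G \<Longrightarrow> f g \<in> polys_le \<phi> S p"
  shows "prod f G \<in> polys_le \<phi> S (p * card G)"
  using assms
proof (induction G rule: finite_induct)
  case (insert x F)
  then have "f x * prod f F \<in> polys_le \<phi> S (p + p * card F)"
    by (intro polys_le_mult) auto
  then show ?case using insert by simp
qed (simp add: one_mem_polys_le)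

lemma prod_list_mem_prod_span: "set xs \<subseteq> W \<Longrightarrow> prod_list xs \<in> prod_span \<phi> W (length xs)"
  unfolding prod_span_def by (rule V.span_base) auto

lemma mult_mem_prod_span_Suc:
  assumes "a \<in> W" and "p \<in> prod_span \<phi> W k"
  shows "a * p \<in> prod_span \<phi> W (Suc k)"
  unfolding prod_span_def
proof (rule span_mult_left[OF h\<phi> _ assms(2)[unfolded prod_span_def]], intro ballI)
  fix b assume "b \<in> {prod_list xs | xs. length xs = k \<and> set xs \<subseteq> W}"
  then obtain xs where "b = prod_list xs" "length xs = k" "set xs \<subseteq> W" by auto
  then show "a * b \<in> V.span {prod_list xs | xs. length xs = Suc k \<and> set xs \<subseteq> W}"
    using assms(1) by (intro V.span_base CollectI exI[of _ "a # xs"]) simp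
qed

lemma prod_span_span_subset: "prod_span \<phi> (V.span G) k \<subseteq> prod_span \<phi> G k"
proof -
  have "prod_list xs \<in> prod_span \<phi> G (length xs)" if "set xs \<subseteq> V.span G" for xs
    using that
  proof (induction xs)
    case Nil
    show ?case using prod_list_mem_prod_span[of "[]"] by simp
  next
    case (Cons a xs)
    have "a * prod_list xs \<in> prod_span \<phi> G (Suc (length xs))"
      unfolding prod_span_def
    proof (rule span_mult[OF h\<phi> _ _ Cons.IH[unfolded prod_span_def]], intro ballI)
      fix g b assume "g \<in> G" and "b \<in> {prod_list ys | ys. length ys = length xs \<and> set ys \<subseteq> G}"
      then obtain ys where "b = prod_list ys" "length ys = length xs" "set ys \<subseteq> G" by auto
      with \<open>g \<in> G\<close> show "g * b \<in> V.span {prod_list ys | ys. length ys = Suc (length xs) \<and> set ys \<subseteq> G}"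
        by (intro V.span_base CollectI exI[of _ "g # ys"]) simp
    qed (use Cons.prems in auto)
    then show ?case by simp
  qed
  then show ?thesis
    unfolding prod_span_def[of _ "V.span G"] by (intro V.span_minimal) (auto simp: prod_span_def)
qed

lemma kalg_mono_image_prod_span:
  assumes f: "kalg_mono \<phi> f" and W: "f ` W \<subseteq> W" and p: "p \<in> prod_span \<phi> W k"
  shows "f p \<in> prod_span \<phi> W k"
proof -
  let ?P = "{prod_list xs | xs. length xs = k \<and> set xs \<subseteq> W}"
  have "f p \<in> V.span (f ` ?P)"
    using f p by (intro span_additive_image[OF h\<phi>]) (auto simp: kalg_mono_def prod_span_def)
  moreover have "f ` ?P \<subseteq> ?P"
  proof
    fix y assume "y \<in> f ` ?P"
    then obtain xs where "y = f (prod_list xs)" "length xs = k" "set xs \<subseteq> W" by auto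
    with W show "y \<in> ?P"
      by (intro CollectI exI[of _ "map f xs"]) (auto simp: kalg_mono_prod_list[OF f])
  qed
  ultimately show ?thesis
    unfolding prod_span_def using V.span_mono by blast
qed

lemma subspace_sl_box:
  assumes "V.subspace P"
  shows "VF.subspace (sl_box N P)"
  unfolding VF.subspace_def
proof (intro conjI ballI allI)
  fix x y assume "x \<in> sl_box N P" "y \<in> sl_box N P"
  then show "x + y \<in> sl_box N P"
    using V.subspace_add[OF assms] by (auto simp: sl_box_def) (metis add.right_neutral)
next
  fix c x assume "x \<in> sl_box N P"
  then show "sl_scale \<phi> c x \<in> sl_box N P"
    using V.subspace_scale[OF assms] by (auto simp: sl_box_def sl_scale_def kscale_def)
      (metis mult_zero_right)
qed (use V.subspace_0[OF assms] in \<open>simp add: sl_box_def\<close>)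

lemma sl_mult_mem_sl_box:
  assumes aut: "k_aut \<iota> \<sigma>" and P3: "V.subspace P3"
    and mult: "\<And>a b i. a \<in> P1 \<Longrightarrow> b \<in> P2 \<Longrightarrow> a * zpow \<sigma> i b \<in> P3"
    and x: "x \<in> sl_box M P1" and y: "y \<in> sl_box N P2"
  shows "sl_mult \<sigma> x y \<in> sl_box (M + N) P3"
proof -
  have val: "sl_mult \<sigma> x y n = (\<Sum>i\<in>{i. x i \<noteq> 0}. x i * zpow \<sigma> i (y (n - i)))" for n
    by (simp add: sl_mult_def)
  have "sl_mult \<sigma> x y n \<in> P3" for n
    unfolding val using x y by (intro V.subspace_sum[OF P3]) (auto simp: sl_box_def mult)
  moreover have "\<bar>n\<bar> \<le> int (M + N)" if nz: "sl_mult \<sigma> x y n \<noteq> 0" for n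
  proof -
    obtain i where "i \<in> {i. x i \<noteq> 0}" "x i * zpow \<sigma> i (y (n - i)) \<noteq> 0"
      using nz unfolding val by (rule sum.not_neutral_contains_not_neutral)
    moreover have "zpow \<sigma> i 0 = 0" by (rule kalg_mono_zero[OF kalg_mono_zpow[OF aut]])
    ultimately have "x i \<noteq> 0" "y (n - i) \<noteq> 0" by auto
    then have "\<bar>i\<bar> \<le> int M" "\<bar>n - i\<bar> \<le> int N"
      using x y by (auto simp: sl_box_def)
    then show ?thesis by arith
  qed
  ultimately show ?thesis by (simp add: sl_box_def)
qed

lemma prod_span_mono: "W \<subseteq> W' \<Longrightarrow> prod_span \<phi> W k \<subseteq> prod_span \<phi> W' k"
  unfolding prod_span_def by (intro V.span_mono) auto

lemma sl_monom_mem_span: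
  assumes "x \<in> V.span T" and "i \<in> I"
  shows "sl_monom x i \<in> VF.span {sl_monom t i | t i. t \<in> T \<and> i \<in> I}"
  using assms(1)
proof (induction x rule: V.span_induct_alt)
  case base
  have "sl_monom (0::'a) i = 0" by (simp add: sl_monom_def fun_eq_iff)
  then show ?case by (metis VF.span_zero)
next
  case (step c x y)
  have eq: "sl_monom (kscale \<phi> c x + y) i = sl_scale \<phi> c (sl_monom x i) + sl_monom y i"
    by (simp add: sl_monom_def fun_eq_iff kscale_def sl_scale_def)
  have "sl_monom x i \<in> {sl_monom t i | t i. t \<in> T \<and> i \<in> I}"
    using step assms(2) by auto
  then have "sl_scale \<phi> c (sl_monom x i) \<in> VF.span {sl_monom t i | t i. t \<in> T \<and> i \<in> I}"
    by (intro VF.span_scale VF.span_base)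
  then show ?case
    unfolding eq by (rule VF.span_add[OF _ step.IH])
qed

lemma sl_box_subset_span_monoms:
  assumes "P \<subseteq> V.span T"
  shows "sl_box N P \<subseteq> VF.span {sl_monom t i | t i. t \<in> T \<and> i \<in> {- int N..int N}}"
proof
  fix f assume f: "f \<in> sl_box N P"
  have "f = (\<Sum>n\<in>{- int N..int N}. sl_monom (f n) n)"
  proof
    fix x
    have "(\<Sum>n\<in>{- int N..int N}. sl_monom (f n) n) x = (\<Sum>n\<in>{- int N..int N}. sl_monom (f n) n x)"
      by (rule sum_fun_apply)
    then show "f x = (\<Sum>n\<in>{- int N..int N}. sl_monom (f n) n) x"
      using f by (cases "\<bar>x\<bar> \<le> int N") (auto simp: sl_box_def sl_monom_def)
  qed
  also have "\<dots> \<in> VF.span {sl_monom t i | t i. t \<in> T \<and> i \<in> {- int N..int N}}"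
    using f assms by (intro VF.span_sum sl_monom_mem_span) (auto simp: sl_box_def)
  finally show "f \<in> VF.span {sl_monom t i | t i. t \<in> T \<and> i \<in> {- int N..int N}}" .
qed

end

lemma sl_box_mono: "P \<subseteq> P' \<Longrightarrow> sl_box N P \<subseteq> sl_box N P'"
  unfolding sl_box_def by auto

lemma
  assumes "finite T"
  shows finite_sl_monoms: "finite {sl_monom t i | t i. t \<in> T \<and> i \<in> {- int N..int N}}"
    and card_sl_monoms: "card {sl_monom t i | t i. t \<in> T \<and> i \<in> {- int N..int N}} \<le> card T * (2 * N + 1)"
proof -
  have eq: "{sl_monom t i | t i. t \<in> T \<and> i \<in> {- int N..int N}} = (\<lambda>(t, i). sl_monom t i) ` (T \<times> {- int N..int N})"
    by fastforce
  show "finite {sl_monom t i | t i. t \<in> T \<and> i \<in> {- int N..int N}}"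
    unfolding eq using assms by simp
  have "card ((\<lambda>(t, i). sl_monom t i) ` (T \<times> {- int N..int N})) \<le> card (T \<times> {- int N..int N})"
    using assms by (intro card_image_le) simp
  moreover have "card {- int N..int N} = 2 * N + 1" by simp
  ultimately show "card {sl_monom t i | t i. t \<in> T \<and> i \<in> {- int N..int N}} \<le> card T * (2 * N + 1)"
    unfolding eq by (simp add: card_cartesian_product)
qed


lemma alg_indep_power_prod:
  assumes "alg_indep \<phi> S" and "finite E" and "\<forall>\<gamma>\<in>E. \<forall>x. x \<notin> S \<longrightarrow> \<gamma> x = 0"
    and "(\<Sum>\<gamma>\<in>E. \<phi> (c \<gamma>) * power_prod S \<gamma>) = 0"
  shows "\<forall>\<gamma>\<in>E. c \<gamma> = 0"
  using assms unfolding alg_indep_def power_prod_def by blast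

lemma relation_with_nonzero_top:
  fixes P :: "nat \<Rightarrow> 'a::comm_ring_1"
  assumes rel: "(\<Sum>j\<le>M. P j * g ^ j) = 0" and "j0 \<le> M" "P j0 \<noteq> 0"
  obtains e where "1 \<le> e" "P e \<noteq> 0" "(\<Sum>j\<le>e. P j * g ^ j) = 0"
proof -
  define e where "e = Max {j. j \<le> M \<and> P j \<noteq> 0}"
  have fin: "finite {j. j \<le> M \<and> P j \<noteq> 0}" by simp
  have "e \<in> {j. j \<le> M \<and> P j \<noteq> 0}"
    unfolding e_def using assms(2,3) by (intro Max_in fin) auto
  then have "e \<le> M" "P e \<noteq> 0" by auto
  have "P j = 0" if "e < j" "j \<le> M" for j
  proof (rule ccontr)
    assume "P j \<noteq> 0"
    then have "j \<le> e" unfolding e_def using that(2) by (intro Max_ge fin) simp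
    then show False using that(1) by simp
  qed
  then have "(\<Sum>j\<le>e. P j * g ^ j) = (\<Sum>j\<le>M. P j * g ^ j)"
    using \<open>e \<le> M\<close> by (intro sum.mono_neutral_left) auto
  then have "(\<Sum>j\<le>e. P j * g ^ j) = 0" using rel by simp
  moreover have "e \<noteq> 0"
  proof
    assume "e = 0"
    with \<open>(\<Sum>j\<le>e. P j * g ^ j) = 0\<close> \<open>P e \<noteq> 0\<close> show False by simp
  qed
  ultimately show ?thesis by (intro that[of e]) (simp_all add: \<open>P e \<noteq> 0\<close>)
qed

text \<open>If \<open>g \<notin> S\<close>, the exponent vectors of a polynomial relation in \<open>insert g S\<close> that share the
  exponent of \<open>g\<close> are told apart by their restriction to \<open>S\<close>.\<close>
lemma alg_indep_fibre_sum_eq_zero: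
  fixes \<phi> :: "'k::field \<Rightarrow> 'f::field"
  assumes ind: "alg_indep \<phi> S" and "g \<notin> S" and "finite E"
    and supp: "\<forall>e\<in>E. \<forall>x. x \<notin> insert g S \<longrightarrow> e x = 0"
    and zero: "(\<Sum>e\<in>{e\<in>E. e g = j}. \<phi> (c e) * power_prod S (\<lambda>x. if x \<in> S then e x else 0)) = 0"
  shows "\<forall>e\<in>E. e g = j \<longrightarrow> c e = 0"
proof -
  define F where "F = {e\<in>E. e g = j}"
  define r where "r e = (\<lambda>x. if x \<in> S then e x else 0)" for e :: "'f \<Rightarrow> nat"
  have inj: "inj_on r F"
  proof (rule inj_onI)
    fix e e' assume "e \<in> F" "e' \<in> F" "r e = r e'"
    show "e = e'"
    proof
      fix x
      show "e x = e' x"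
        using fun_cong[OF \<open>r e = r e'\<close>, of x] \<open>e \<in> F\<close> \<open>e' \<in> F\<close> supp
        by (cases "x \<in> S"; cases "x = g") (simp_all add: F_def r_def, metis)
    qed
  qed
  define c' where "c' \<gamma> = c (the_inv_into F r \<gamma>)" for \<gamma>
  have "(\<Sum>\<gamma>\<in>r ` F. \<phi> (c' \<gamma>) * power_prod S \<gamma>) = (\<Sum>e\<in>F. \<phi> (c e) * power_prod S (r e))"
    by (simp add: sum.reindex[OF inj] c'_def the_inv_into_f_f[OF inj])
  then have "\<forall>\<gamma>\<in>r ` F. c' \<gamma> = 0"
    using zero \<open>finite E\<close> unfolding F_def r_def
    by (intro alg_indep_power_prod[OF ind]) auto
  moreover have "c e = c' (r e)" if "e \<in> F" for e
    using that by (simp add: c'_def the_inv_into_f_f[OF inj])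
  ultimately show ?thesis by (auto simp: F_def)
qed

lemma sum_group_by_power:
  fixes h :: "'b \<Rightarrow> 'a::comm_semiring_1"
  assumes "finite E" and "\<And>e. e \<in> E \<Longrightarrow> f e \<le> M"
  shows "(\<Sum>e\<in>E. h e * g ^ f e) = (\<Sum>j\<le>M. (\<Sum>e\<in>{e\<in>E. f e = j}. h e) * g ^ j)"
proof -
  have "(\<Sum>j\<le>M. (\<Sum>e\<in>{e\<in>E. f e = j}. h e) * g ^ j) = (\<Sum>j\<le>M. \<Sum>e\<in>{e\<in>E. f e = j}. h e * g ^ f e)"
    unfolding sum_distrib_right by (intro sum.cong refl) auto
  also have "\<dots> = (\<Sum>e\<in>E. h e * g ^ f e)"
    by (rule sum.group) (use assms in auto)
  finally show ?thesis ..
qed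

lemma dependent_insert_relation:
  fixes \<phi> :: "'k::field \<Rightarrow> 'f::field"
  assumes h\<phi>: "kalg_hom \<phi>" and ind: "alg_indep \<phi> S" and "g \<notin> S"
    and dep: "\<not> alg_indep \<phi> (insert g S)"
  obtains M A P j0 where "\<forall>j. P j \<in> polys_le \<phi> S A" "(\<Sum>j\<le>M. P j * g ^ j) = 0" "j0 \<le> M" "P j0 \<noteq> 0"
proof -
  have "finite S" using ind by (simp add: alg_indep_def)
  then obtain E c e0 where "finite E" and supp: "\<forall>e\<in>E. \<forall>x. x \<notin> insert g S \<longrightarrow> e x = 0"
    and rel: "(\<Sum>e\<in>E. \<phi> (c e) * (\<Prod>x\<in>insert g S. x ^ e x)) = 0" and "e0 \<in> E" "c e0 \<noteq> 0"
    using dep unfolding alg_indep_def by auto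
  define r where "r e = (\<lambda>x. if x \<in> S then e x else 0)" for e :: "'f \<Rightarrow> nat"
  have split: "(\<Prod>x\<in>insert g S. x ^ e x) = g ^ e g * power_prod S (r e)" for e
  proof -
    have "power_prod S (r e) = (\<Prod>x\<in>S. x ^ e x)"
      unfolding power_prod_def r_def by (rule prod.cong) auto
    then show ?thesis using \<open>g \<notin> S\<close> \<open>finite S\<close> by simp
  qed
  define A where "A = (\<Sum>e\<in>E. sum e S)"
  have r_mem: "r e \<in> degree_le_exps S A" if "e \<in> E" for e
  proof -
    have "sum (r e) S = sum e S" unfolding r_def by (rule sum.cong) auto
    also have "\<dots> \<le> A" unfolding A_def using \<open>finite E\<close> that by (intro member_le_sum) auto
    finally show ?thesis by (simp add: degree_le_exps_def r_def)
  qed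
  define M where "M = Max ((\<lambda>e. e g) ` E)"
  have le_M: "e g \<le> M" if "e \<in> E" for e
    unfolding M_def using \<open>finite E\<close> that by auto
  define P where "P j = (\<Sum>e\<in>{e\<in>E. e g = j}. \<phi> (c e) * power_prod S (r e))" for j
  have grouped: "(\<Sum>e\<in>E. \<phi> (c e) * power_prod S (r e) * g ^ e g) = (\<Sum>j\<le>M. P j * g ^ j)"
    unfolding P_def by (rule sum_group_by_power) (use \<open>finite E\<close> le_M in auto)
  have "P j \<in> polys_le \<phi> S A" for j
    unfolding P_def using r_mem by (intro lincomb_mem_polys_le[OF h\<phi>]) auto
  moreover have "(\<Sum>j\<le>M. P j * g ^ j) = 0"
    using rel grouped by (simp add: split mult_ac)
  moreover have "P (e0 g) \<noteq> 0"
    using alg_indep_fibre_sum_eq_zero[OF ind \<open>g \<notin> S\<close> \<open>finite E\<close> supp, of c "e0 g"]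
      \<open>e0 \<in> E\<close> \<open>c e0 \<noteq> 0\<close> by (auto simp: P_def r_def)
  ultimately show ?thesis using that le_M[OF \<open>e0 \<in> E\<close>] by blast
qed

lemma exists_alg_relation:
  fixes \<phi> :: "'k::field \<Rightarrow> 'f::field"
  assumes h\<phi>: "kalg_hom \<phi>" and ind: "alg_indep \<phi> S"
    and max: "\<forall>y. y \<notin> S \<longrightarrow> \<not> alg_indep \<phi> (insert y S)"
  obtains e A P where "1 \<le> e" "\<forall>j\<le>e. P j \<in> polys_le \<phi> S A" "P e \<noteq> 0" "(\<Sum>j\<le>e. P j * g ^ j) = 0"
proof (cases "g \<in> S")
  case True
  interpret V: vector_space "kscale \<phi>" by (rule vector_space_kscale[OF h\<phi>])
  have "finite S" using ind by (simp add: alg_indep_def)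
  define \<delta> where "\<delta> = (\<lambda>x. if x = g then 1 else 0::nat)"
  have "power_prod S \<delta> = (\<Prod>x\<in>S. if x = g then x else 1)"
    unfolding power_prod_def \<delta>_def by (rule prod.cong) auto
  then have "power_prod S \<delta> = g"
    using True \<open>finite S\<close> by simp
  moreover have "\<delta> \<in> degree_le_exps S 1"
    using True \<open>finite S\<close> by (simp add: degree_le_exps_def \<delta>_def)
  ultimately have "g \<in> polys_le \<phi> S 1"
    using power_prod_mem_polys_le[OF h\<phi>] by metis
  then have "- g \<in> polys_le \<phi> S 1"
    unfolding polys_le_def by (rule V.span_neg)
  then show ?thesis
    using that[of 1 "\<lambda>j. if j = 0 then - g else 1" 1] one_mem_polys_le[OF h\<phi>] by (simp add: le_Suc_eq)
next
  case False
  then have "\<not> alg_indep \<phi> (insert g S)" using max by blast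
  then obtain M A P j0 where P: "\<forall>j. P j \<in> polys_le \<phi> S A"
    and rel: "(\<Sum>j\<le>M. P j * g ^ j) = 0" "j0 \<le> M" "P j0 \<noteq> 0"
    by (rule dependent_insert_relation[OF h\<phi> ind False])
  obtain e where "1 \<le> e" "P e \<noteq> 0" "(\<Sum>j\<le>e. P j * g ^ j) = 0"
    using rel by (rule relation_with_nonzero_top)
  with P show ?thesis using that by blast
qed

text \<open>After multiplying by \<open>lead_prod ^ m\<close>, every power of \<open>g\<close> of exponent
  \<open>\<ge> e g\<close> can be rewritten with lower ones, so an \<open>m\<close>-fold product of elements of \<open>Gs\<close> lies in the span
  of \<open>reduced_spanning_set m\<close>, a set of size \<open>O(m ^ card S)\<close>.\<close>
locale integral_relations =
  fixes \<phi> :: "'k::field \<Rightarrow> 'a::comm_ring_1" and S :: "'a set" and Gs :: "'a set"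
    and e :: "'a \<Rightarrow> nat" and A :: nat and P :: "'a \<Rightarrow> nat \<Rightarrow> 'a"
  assumes kalg: "kalg_hom \<phi>" and finite_S: "finite S" and finite_Gs: "finite Gs"
    and e_pos: "\<And>g. g \<in> Gs \<Longrightarrow> 1 \<le> e g"
    and coeff_mem: "\<And>g j. g \<in> Gs \<Longrightarrow> j \<le> e g \<Longrightarrow> P g j \<in> polys_le \<phi> S A"
    and relation: "\<And>g. g \<in> Gs \<Longrightarrow> (\<Sum>j\<le>e g. P g j * g ^ j) = 0"
begin

interpretation V: vector_space "kscale \<phi>" by (rule vector_space_kscale[OF kalg])

definition lead_prod :: 'a where
  "lead_prod = (\<Prod>g\<in>Gs. P g (e g))"

definition gs_power :: "('a \<Rightarrow> nat) \<Rightarrow> 'a" where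
  "gs_power \<beta> = (\<Prod>g\<in>Gs. g ^ \<beta> g)"

definition reduced_powers :: "'a set" where
  "reduced_powers = gs_power ` PiE Gs (\<lambda>g. {..<e g})"

definition reduced_spanning_set :: "nat \<Rightarrow> 'a set" where
  "reduced_spanning_set m = (\<lambda>(\<gamma>, z). power_prod S \<gamma> * z) ` (degree_le_exps S (A * card Gs * m) \<times> reduced_powers)"

lemma finite_reduced_powers: "finite reduced_powers"
  unfolding reduced_powers_def using finite_Gs by (simp add: finite_PiE)

lemma finite_reduced_spanning_set: "finite (reduced_spanning_set m)"
  unfolding reduced_spanning_set_def using finite_reduced_powers finite_degree_le_exps[OF finite_S] by simp

lemma card_reduced_spanning_set: "card (reduced_spanning_set m) \<le> card reduced_powers * (A * card Gs * m + 1) ^ card S"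
proof -
  have "card (reduced_spanning_set m) \<le> card (degree_le_exps S (A * card Gs * m) \<times> reduced_powers)"
    unfolding reduced_spanning_set_def
    by (rule card_image_le) (simp add: finite_reduced_powers finite_degree_le_exps[OF finite_S])
  also have "\<dots> \<le> (A * card Gs * m + 1) ^ card S * card reduced_powers"
    using card_degree_le_exps[OF finite_S] by (simp add: card_cartesian_product)
  finally show ?thesis by (simp add: mult.commute)
qed

lemma one_mem_span_reduced_spanning_set_0: "1 \<in> V.span (reduced_spanning_set 0)"
proof -
  have "restrict (\<lambda>_. 0) Gs \<in> PiE Gs (\<lambda>g. {..<e g})"
    using e_pos by (auto simp: Suc_le_eq)
  moreover have "gs_power (restrict (\<lambda>_. 0) Gs) = 1"
    unfolding gs_power_def by simp
  ultimately have "1 \<in> reduced_powers" unfolding reduced_powers_def by (metis image_eqI)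
  then have "power_prod S (\<lambda>_. 0) * 1 \<in> reduced_spanning_set 0"
    unfolding reduced_spanning_set_def using zero_mem_degree_le_exps by force
  then show ?thesis by (simp add: V.span_base)
qed

lemma mult_reduced_power_mem:
  assumes "a \<in> polys_le \<phi> S (A * card Gs * m)" and "z \<in> reduced_powers"
  shows "a * z \<in> V.span (reduced_spanning_set m)"
proof -
  have "\<forall>x\<in>power_prod S ` degree_le_exps S (A * card Gs * m). \<forall>y\<in>{z}. x * y \<in> V.span (reduced_spanning_set m)"
    using assms(2) by (auto simp: reduced_spanning_set_def intro!: V.span_base)
  then show ?thesis
    using span_mult[OF kalg _ assms(1)[unfolded polys_le_def], of "{z}"] by (simp add: V.span_base)
qed

lemma gs_power_update:
  assumes "g \<in> Gs"
  shows "gs_power (\<beta>(g := j)) = g ^ j * (\<Prod>h\<in>Gs - {g}. h ^ \<beta> h)"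
proof -
  have "(\<Prod>h\<in>Gs - {g}. h ^ (\<beta>(g := j)) h) = (\<Prod>h\<in>Gs - {g}. h ^ \<beta> h)"
    by (rule prod.cong) auto
  then show ?thesis
    unfolding gs_power_def using finite_Gs assms by (simp add: prod.remove)
qed

lemma lead_prod_split:
  assumes "g \<in> Gs"
  obtains C' where "lead_prod = P g (e g) * C'" "C' \<in> polys_le \<phi> S (A * (card Gs - 1))"
proof
  show "lead_prod = P g (e g) * (\<Prod>h\<in>Gs - {g}. P h (e h))"
    unfolding lead_prod_def using finite_Gs assms by (simp add: prod.remove)
  show "(\<Prod>h\<in>Gs - {g}. P h (e h)) \<in> polys_le \<phi> S (A * (card Gs - 1))"
    using prod_mem_polys_le[OF kalg, of "Gs - {g}" "\<lambda>h. P h (e h)" S A] finite_Gs assms coeff_mem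
    by simp
qed

lemma gs_power_update_mem:
  assumes "g \<in> Gs" and "\<beta> \<in> PiE Gs (\<lambda>g. {..<e g})" and "j < e g"
  shows "gs_power (\<beta>(g := j)) \<in> reduced_powers"
  unfolding reduced_powers_def using assms by (intro imageI) (auto simp: PiE_def Pi_def extensional_def)

lemma lead_prod_mem: "lead_prod \<in> polys_le \<phi> S (A * card Gs * 1)"
  unfolding lead_prod_def using prod_mem_polys_le[OF kalg finite_Gs, of "\<lambda>g. P g (e g)" S A] coeff_mem
  by simp

lemma lead_prod_mult_top_power:
  assumes g: "g \<in> Gs" and \<beta>: "\<beta> \<in> PiE Gs (\<lambda>g. {..<e g})"
  shows "lead_prod * (g ^ e g * (\<Prod>h\<in>Gs - {g}. h ^ \<beta> h)) \<in> V.span (reduced_spanning_set 1)"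
proof -
  obtain C' where C': "lead_prod = P g (e g) * C'" "C' \<in> polys_le \<phi> S (A * (card Gs - 1))"
    using lead_prod_split[OF g] .
  have "{..e g} = insert (e g) {..<e g}" by auto
  then have top: "P g (e g) * g ^ e g = - (\<Sum>j<e g. P g j * g ^ j)"
    using relation[OF g] by (simp add: eq_neg_iff_add_eq_0 add.commute)
  define z0 where "z0 = (\<Prod>h\<in>Gs - {g}. h ^ \<beta> h)"
  have "lead_prod * (g ^ e g * z0) = C' * (P g (e g) * g ^ e g) * z0"
    by (simp add: C'(1) ac_simps)
  also have "\<dots> = - (\<Sum>j<e g. (C' * P g j) * (g ^ j * z0))"
    unfolding top by (simp add: sum_distrib_left sum_distrib_right sum_negf mult.assoc)
  also have "\<dots> = - (\<Sum>j<e g. (C' * P g j) * gs_power (\<beta>(g := j)))"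
    by (simp add: gs_power_update[OF g, of \<beta>] z0_def)
  also have "\<dots> \<in> V.span (reduced_spanning_set 1)"
  proof (intro V.span_neg V.span_sum mult_reduced_power_mem)
    fix j assume j: "j \<in> {..<e g}"
    have "A * (card Gs - 1) + A = A * card Gs * 1"
      using g finite_Gs by (cases "card Gs") (auto simp: algebra_simps card_gt_0_iff)
    then show "C' * P g j \<in> polys_le \<phi> S (A * card Gs * 1)"
      using polys_le_mult[OF kalg C'(2) coeff_mem[OF g, of j]] j by simp
    show "gs_power (\<beta>(g := j)) \<in> reduced_powers"
      using gs_power_update_mem[OF g \<beta>] j by simp
  qed
  finally show ?thesis by (simp add: z0_def)
qed

lemma lead_prod_mult_mem:
  assumes g: "g \<in> Gs" and z: "z \<in> reduced_powers"
  shows "lead_prod * (g * z) \<in> V.span (reduced_spanning_set 1)"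
proof -
  obtain \<beta> where \<beta>: "\<beta> \<in> PiE Gs (\<lambda>g. {..<e g})" and z_eq: "z = gs_power \<beta>"
    using z by (auto simp: reduced_powers_def)
  have "\<beta> g < e g" using \<beta> g by auto
  have gz: "g * z = g ^ Suc (\<beta> g) * (\<Prod>h\<in>Gs - {g}. h ^ \<beta> h)"
    using gs_power_update[OF g, of \<beta> "\<beta> g"] by (simp add: z_eq)
  show ?thesis
  proof (cases "Suc (\<beta> g) < e g")
    case True
    then have "g * z \<in> reduced_powers"
      using gs_power_update_mem[OF g \<beta> True] gs_power_update[OF g] gz by simp
    then show ?thesis by (rule mult_reduced_power_mem[OF lead_prod_mem])
  next
    case False
    then have "e g = Suc (\<beta> g)" using \<open>\<beta> g < e g\<close> by simp
    then show ?thesis using lead_prod_mult_top_power[OF g \<beta>] gz by simp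
  qed
qed

lemma power_prod_mult_reduced_spanning_set:
  assumes "\<gamma> \<in> degree_le_exps S (A * card Gs * m)" and "b \<in> reduced_spanning_set 1"
  shows "power_prod S \<gamma> * b \<in> reduced_spanning_set (Suc m)"
proof -
  obtain \<delta> z where "\<delta> \<in> degree_le_exps S (A * card Gs * 1)" "z \<in> reduced_powers"
    and "b = power_prod S \<delta> * z"
    using assms(2) by (auto simp: reduced_spanning_set_def)
  moreover have "\<gamma> + \<delta> \<in> degree_le_exps S (A * card Gs * Suc m)"
    using add_mem_degree_le_exps[OF assms(1) \<open>\<delta> \<in> _\<close>] by (simp add: algebra_simps)
  ultimately show ?thesis
    unfolding reduced_spanning_set_def by (auto simp: power_prod_add mult.assoc intro!: image_eqI[of _ _ "(\<gamma> + \<delta>, z)"])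
qed

lemma lead_prod_power_mult_prod_list_mem:
  "set xs \<subseteq> Gs \<Longrightarrow> lead_prod ^ length xs * prod_list xs \<in> V.span (reduced_spanning_set (length xs))"
proof (induction xs)
  case Nil
  then show ?case using one_mem_span_reduced_spanning_set_0 by simp
next
  case (Cons g xs)
  have step: "lead_prod * g * y \<in> V.span (reduced_spanning_set (Suc (length xs)))" if y: "y \<in> reduced_spanning_set (length xs)" for y
  proof -
    obtain \<gamma> z where "\<gamma> \<in> degree_le_exps S (A * card Gs * length xs)" "z \<in> reduced_powers"
      and "y = power_prod S \<gamma> * z"
      using y by (auto simp: reduced_spanning_set_def)
    moreover have "power_prod S \<gamma> * (lead_prod * (g * z)) \<in> V.span (reduced_spanning_set (Suc (length xs)))"
    proof (rule span_mult_left[OF kalg _ lead_prod_mult_mem], intro ballI V.span_base)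
      show "power_prod S \<gamma> * b \<in> reduced_spanning_set (Suc (length xs))" if "b \<in> reduced_spanning_set 1" for b
        using power_prod_mult_reduced_spanning_set[OF \<open>\<gamma> \<in> _\<close> that] .
    qed (use Cons.prems \<open>z \<in> _\<close> in auto)
    ultimately show ?thesis by (simp add: ac_simps)
  qed
  have "lead_prod ^ length xs * prod_list xs \<in> V.span (reduced_spanning_set (length xs))"
    using Cons by simp
  then have "lead_prod * g * (lead_prod ^ length xs * prod_list xs) \<in> V.span (reduced_spanning_set (Suc (length xs)))"
    by (rule span_mult_left[OF kalg, rotated]) (use step in blast)
  then show ?case by (simp add: ac_simps)
qed

end

lemma transcendence_basis_span_bound:
  fixes \<phi> :: "'k::field \<Rightarrow> 'f::field"
  assumes kalg: "kalg_hom \<phi>" and ind: "alg_indep \<phi> S"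
    and max: "\<forall>y. y \<notin> S \<longrightarrow> \<not> alg_indep \<phi> (insert y S)" and "finite Gs"
  obtains C a b T where "C \<noteq> 0" "\<And>m. finite (T m)" "\<And>m. card (T m) \<le> b * (a * m + 1) ^ card S"
    "\<And>xs. set xs \<subseteq> Gs \<Longrightarrow> C ^ length xs * prod_list xs \<in> module.span (kscale \<phi>) (T (length xs))"
proof -
  define Rel where "Rel g e A P \<longleftrightarrow> 1 \<le> e \<and> (\<forall>j\<le>e. P j \<in> polys_le \<phi> S A) \<and> P e \<noteq> 0
    \<and> (\<Sum>j\<le>e. P j * g ^ j) = 0" for g e A P
  have "\<forall>g. \<exists>e A P. Rel g e A P"
    unfolding Rel_def using exists_alg_relation[OF kalg ind max] by metis
  from choice[OF this] obtain e where "\<forall>g. \<exists>A P. Rel g (e g) A P" by blast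
  from choice[OF this] obtain A where "\<forall>g. \<exists>P. Rel g (e g) (A g) P" by blast
  from choice[OF this] obtain P where rel: "\<And>g. Rel g (e g) (A g) (P g)" by blast
  define A0 where "A0 = (\<Sum>g\<in>Gs. A g)"
  have "P g j \<in> polys_le \<phi> S A0" if "g \<in> Gs" "j \<le> e g" for g j
  proof -
    have "A g \<le> A0" unfolding A0_def using \<open>finite Gs\<close> that by (intro member_le_sum) auto
    moreover have "P g j \<in> polys_le \<phi> S (A g)" using rel[of g] that by (simp add: Rel_def)
    ultimately show ?thesis using polys_le_mono[OF kalg] by blast
  qed
  moreover have "finite S" using ind by (simp add: alg_indep_def)
  ultimately interpret integral_relations \<phi> S Gs e A0 P
    using kalg \<open>finite Gs\<close> rel by unfold_locales (auto simp: Rel_def)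
  have "lead_prod \<noteq> 0"
    unfolding lead_prod_def using rel \<open>finite Gs\<close> by (simp add: Rel_def)
  then show ?thesis
    using that[of lead_prod reduced_spanning_set "card reduced_powers" "A0 * card Gs"]
      finite_reduced_spanning_set card_reduced_spanning_set lead_prod_power_mult_prod_list_mem by auto
qed

lemma skew_laurent_support_bound:
  assumes "finite F" and "F \<subseteq> skew_laurent"
  obtains N where "\<And>f n. f \<in> F \<Longrightarrow> f n \<noteq> 0 \<Longrightarrow> \<bar>n\<bar> \<le> int N"
proof
  define N where "N = Max (insert 0 (\<Union>f\<in>F. (\<lambda>n. nat \<bar>n\<bar>) ` {n. f n \<noteq> 0}))"
  have fin: "finite (insert 0 (\<Union>f\<in>F. (\<lambda>n. nat \<bar>n\<bar>) ` {n. f n \<noteq> 0}))"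
    using assms by (auto simp: skew_laurent_def)
  show "\<bar>n\<bar> \<le> int N" if "f \<in> F" "f n \<noteq> 0" for f n
  proof -
    have "nat \<bar>n\<bar> \<le> N" unfolding N_def using that by (intro Max_ge[OF fin]) auto
    then show ?thesis by simp
  qed
qed

definition orbit_span :: "('k::field \<Rightarrow> 'r::comm_ring_1) \<Rightarrow> ('r \<Rightarrow> 'r) \<Rightarrow> 'r set \<Rightarrow> 'r set" where
  "orbit_span \<iota> \<sigma> R = module.span (kscale \<iota>) {zpow \<sigma> n r | n r. r \<in> R}"

context
  fixes \<iota> :: "'k::field \<Rightarrow> 'r::comm_ring_1"
  assumes h\<iota>: "kalg_hom \<iota>"
begin

interpretation V: vector_space "kscale \<iota>" by (rule vector_space_kscale[OF h\<iota>])

lemma subspace_orbit_span: "V.subspace (orbit_span \<iota> \<sigma> R)"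
  unfolding orbit_span_def by (rule V.subspace_span)

lemma subset_orbit_span: "R \<subseteq> orbit_span \<iota> \<sigma> R"
proof
  fix r assume "r \<in> R"
  then have "zpow \<sigma> 0 r \<in> {zpow \<sigma> n r | n r. r \<in> R}" by blast
  then show "r \<in> orbit_span \<iota> \<sigma> R" by (simp add: orbit_span_def V.span_base)
qed

lemma zpow_mem_orbit_span:
  assumes aut: "k_aut \<iota> \<sigma>" and "x \<in> orbit_span \<iota> \<sigma> R"
  shows "zpow \<sigma> i x \<in> orbit_span \<iota> \<sigma> R"
proof -
  let ?O = "{zpow \<sigma> n r | n r. r \<in> R}"
  have "zpow \<sigma> i x \<in> V.span (zpow \<sigma> i ` ?O)"
    using kalg_mono_zpow[OF aut, of i] assms(2)
    by (intro span_additive_image[OF h\<iota>]) (auto simp: kalg_mono_def orbit_span_def)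
  moreover have "zpow \<sigma> i ` ?O \<subseteq> ?O"
    using aut by (auto simp: k_aut_def zpow_zpow; blast)
  ultimately show ?thesis
    unfolding orbit_span_def using V.span_mono by blast
qed

lemma orbit_span_finite_span:
  assumes "locally_algebraic \<iota> \<sigma>" and "finite R"
  obtains G where "finite G" "orbit_span \<iota> \<sigma> R \<subseteq> V.span G"
proof -
  have "\<forall>r. \<exists>Fr. finite Fr \<and> (\<forall>n. zpow \<sigma> n r \<in> V.span Fr)"
    using assms(1) by (simp add: locally_algebraic_def)
  from choice[OF this] obtain Fr where Fr: "\<And>r. finite (Fr r)" "\<And>r n. zpow \<sigma> n r \<in> V.span (Fr r)"
    by blast
  have "orbit_span \<iota> \<sigma> R \<subseteq> V.span (\<Union>r\<in>R. Fr r)"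
    unfolding orbit_span_def
  proof (intro V.span_minimal[OF _ V.subspace_span] subsetI)
    fix x assume "x \<in> {zpow \<sigma> n r | n r. r \<in> R}"
    then obtain n r where "x = zpow \<sigma> n r" "r \<in> R" by auto
    then show "x \<in> V.span (\<Union>r\<in>R. Fr r)"
      using Fr(2)[of n r] V.span_mono[of "Fr r" "\<Union>r\<in>R. Fr r"] by auto
  qed
  then show ?thesis using that Fr(1) \<open>finite R\<close> by blast
qed

end

lemma pow_space_subset_sl_box:
  fixes \<iota> :: "'k::field \<Rightarrow> 'r::comm_ring_1"
  assumes h\<iota>: "kalg_hom \<iota>" and aut: "k_aut \<iota> \<sigma>"
    and stable: "\<And>i x. x \<in> W \<Longrightarrow> zpow \<sigma> i x \<in> W"
    and V: "V \<subseteq> sl_box N W"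
  shows "pow_space (sl_scale \<iota>) (sl_mult \<sigma>) sl_one V m \<subseteq> sl_box (N * m) (prod_span \<iota> W m)"
proof -
  interpret VR: vector_space "kscale \<iota>" by (rule vector_space_kscale[OF h\<iota>])
  interpret VF: vector_space "sl_scale \<iota>" by (rule vector_space_sl_scale[OF h\<iota>])
  have prod_span_subspace: "VR.subspace (prod_span \<iota> W k)" for k
    unfolding prod_span_def by (rule VR.subspace_span)
  show ?thesis
  proof (rule VF.pow_space_subset)
    show "VF.subspace (sl_box (N * k) (prod_span \<iota> W k))" for k
      by (rule subspace_sl_box[OF h\<iota> prod_span_subspace])
    have "1 \<in> prod_span \<iota> W 0" "0 \<in> prod_span \<iota> W 0"
      using prod_list_mem_prod_span[OF h\<iota>, of "[]" W] VR.subspace_0[OF prod_span_subspace] by simp_all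
    then show "sl_one \<in> sl_box (N * 0) (prod_span \<iota> W 0)"
      by (simp add: sl_box_def sl_one_def)
  next
    fix x y k assume "x \<in> V" "y \<in> sl_box (N * k) (prod_span \<iota> W k)"
    have "a * zpow \<sigma> i b \<in> prod_span \<iota> W (Suc k)" if "a \<in> W" "b \<in> prod_span \<iota> W k" for a b i
      using that stable
      by (intro mult_mem_prod_span_Suc[OF h\<iota>] kalg_mono_image_prod_span[OF h\<iota> kalg_mono_zpow[OF aut]]) auto
    then have "sl_mult \<sigma> x y \<in> sl_box (N + N * k) (prod_span \<iota> W (Suc k))"
      using \<open>x \<in> V\<close> V \<open>y \<in> _\<close> by (intro sl_mult_mem_sl_box[OF h\<iota> aut prod_span_subspace, of W]) auto
    then show "sl_mult \<sigma> x y \<in> sl_box (N * Suc k) (prod_span \<iota> W (Suc k))"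
      by (simp add: algebra_simps)
  qed
qed

lemma linear_to_fract_scaled:
  fixes \<iota> :: "'k::field \<Rightarrow> 'r::idom"
  assumes "kalg_hom \<iota>"
  shows "Vector_Spaces.linear (sl_scale \<iota>) (sl_scale (frac_emb \<iota>)) (\<lambda>f n. to_fract (f n) * C)"
  unfolding Vector_Spaces.linear_def module_hom_def module_hom_axioms_def module_iff_vector_space
  using vector_space_sl_scale[OF assms] vector_space_sl_scale[OF kalg_hom_frac_emb[OF assms]]
  by (auto simp: fun_eq_iff sl_scale_def frac_emb_conv_to_fract algebra_simps)

lemma inj_to_fract_scaled:
  fixes C :: "'r::idom fract"
  assumes "C \<noteq> 0"
  shows "inj (\<lambda>f n. to_fract (f n) * C)"
  using assms by (auto intro!: injI simp: fun_eq_iff)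

lemma to_fract_prod_span_mem:
  fixes \<iota> :: "'k::field \<Rightarrow> 'r::idom"
  assumes h\<iota>: "kalg_hom \<iota>"
    and prods: "\<And>xs. set xs \<subseteq> to_fract ` G \<Longrightarrow>
      C ^ length xs * prod_list xs \<in> module.span (kscale (frac_emb \<iota>)) (T (length xs))"
    and p: "p \<in> prod_span \<iota> G m"
  shows "to_fract p * C ^ m \<in> module.span (kscale (frac_emb \<iota>)) (T m)"
proof -
  interpret VR: vector_space "kscale \<iota>" by (rule vector_space_kscale[OF h\<iota>])
  interpret VK: vector_space "kscale (frac_emb \<iota>)" by (rule vector_space_kscale[OF kalg_hom_frac_emb[OF h\<iota>]])
  have "p \<in> VR.span {prod_list ys | ys. length ys = m \<and> set ys \<subseteq> G}"
    using p by (simp add: prod_span_def)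
  then show ?thesis
  proof (induction p rule: VR.span_induct_alt)
    case (step c x y)
    then obtain ys where ys: "x = prod_list ys" "length ys = m" "set ys \<subseteq> G" by auto
    have "to_fract x * C ^ m = C ^ length (map to_fract ys) * prod_list (map to_fract ys)"
      using ys by (simp add: to_fract_prod_list mult.commute)
    also have "\<dots> \<in> VK.span (T m)"
      using prods[of "map to_fract ys"] ys by auto
    finally have "to_fract x * C ^ m \<in> VK.span (T m)" .
    moreover have "to_fract (kscale \<iota> c x + y) * C ^ m = kscale (frac_emb \<iota>) c (to_fract x * C ^ m) + to_fract y * C ^ m"
      by (simp add: kscale_def frac_emb_conv_to_fract algebra_simps)
    ultimately show ?case using step.IH by (simp add: VK.span_add VK.span_scale)
  qed (simp add: VK.span_zero)
qed

lemma polynomial_growth_bound: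
  fixes a b N m d :: nat
  shows "b * (a * m + 1) ^ d * (2 * N * m + 1) \<le> b * (a + 1) ^ d * (2 * N + 1) * (m + 1) ^ (d + 1)"
proof -
  have "(a * m + 1) ^ d \<le> ((a + 1) * (m + 1)) ^ d"
    by (intro power_mono) (simp_all add: algebra_simps)
  moreover have "2 * N * m + 1 \<le> (2 * N + 1) * (m + 1)"
    by (simp add: algebra_simps)
  ultimately have "b * (a * m + 1) ^ d * (2 * N * m + 1) \<le> b * ((a + 1) * (m + 1)) ^ d * ((2 * N + 1) * (m + 1))"
    by (intro mult_mono) simp_all
  also have "\<dots> = b * (a + 1) ^ d * (2 * N + 1) * (m + 1) ^ (d + 1)"
    unfolding power_mult_distrib power_add power_one_right by (simp only: mult_ac)
  finally show ?thesis .
qed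

lemma pow_space_subset_sl_box_prod_span:
  fixes \<iota> :: "'k::field \<Rightarrow> 'r::comm_ring_1"
  assumes h\<iota>: "kalg_hom \<iota>" and aut: "k_aut \<iota> \<sigma>" and la: "locally_algebraic \<iota> \<sigma>"
    and "finite F" and "F \<subseteq> skew_laurent"
  obtains N G where "finite G" "\<And>m. pow_space (sl_scale \<iota>) (sl_mult \<sigma>) sl_one
    (module.span (sl_scale \<iota>) (insert sl_one F)) m \<subseteq> sl_box (N * m) (prod_span \<iota> G m)"
proof -
  interpret VR: vector_space "kscale \<iota>" by (rule vector_space_kscale[OF h\<iota>])
  interpret VF: vector_space "sl_scale \<iota>" by (rule vector_space_sl_scale[OF h\<iota>])
  define W where "W = orbit_span \<iota> \<sigma> (insert 1 (\<Union>f\<in>F. f ` {n. f n \<noteq> 0}))"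
  have "finite (insert 1 (\<Union>f\<in>F. f ` {n. f n \<noteq> 0}))"
    using assms(4,5) by (auto simp: skew_laurent_def)
  then obtain G where "finite G" "W \<subseteq> VR.span G"
    unfolding W_def by (rule orbit_span_finite_span[OF h\<iota> la]) blast
  obtain N where N: "\<And>f n. f \<in> F \<Longrightarrow> f n \<noteq> 0 \<Longrightarrow> \<bar>n\<bar> \<le> int N"
    by (rule skew_laurent_support_bound[OF \<open>finite F\<close> \<open>F \<subseteq> skew_laurent\<close>]) blast
  have "0 \<in> W"
    unfolding W_def by (rule VR.subspace_0[OF subspace_orbit_span[OF h\<iota>]])
  moreover have coef: "insert 1 (\<Union>f\<in>F. f ` {n. f n \<noteq> 0}) \<subseteq> W"
    unfolding W_def by (rule subset_orbit_span[OF h\<iota>])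
  moreover have "f n \<in> W" if "f \<in> F" for f n
    using that \<open>0 \<in> W\<close> coef by (cases "f n = 0") auto
  ultimately have "insert sl_one F \<subseteq> sl_box N W"
    using N by (auto simp: sl_box_def sl_one_def)
  then have "VF.span (insert sl_one F) \<subseteq> sl_box N W"
    unfolding W_def by (rule VF.span_minimal[OF _ subspace_sl_box[OF h\<iota> subspace_orbit_span[OF h\<iota>]]])
  moreover have "x \<in> W \<Longrightarrow> zpow \<sigma> i x \<in> W" for i x
    unfolding W_def by (rule zpow_mem_orbit_span[OF h\<iota> aut])
  ultimately have "pow_space (sl_scale \<iota>) (sl_mult \<sigma>) sl_one (VF.span (insert sl_one F)) m
      \<subseteq> sl_box (N * m) (prod_span \<iota> W m)" for m
    by (intro pow_space_subset_sl_box[OF h\<iota> aut]) blast+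
  moreover have "prod_span \<iota> W m \<subseteq> prod_span \<iota> G m" for m
    using prod_span_mono[OF h\<iota> \<open>W \<subseteq> VR.span G\<close>] prod_span_span_subset[OF h\<iota>] by blast
  ultimately show ?thesis
    using that[of G N] \<open>finite G\<close> sl_box_mono by blast
qed

lemma pow_space_finite_span_bound:
  fixes \<iota> :: "'k::field \<Rightarrow> 'r::idom"
  assumes h\<iota>: "kalg_hom \<iota>" and aut: "k_aut \<iota> \<sigma>" and la: "locally_algebraic \<iota> \<sigma>"
    and tr: "trdeg_eq (frac_emb \<iota>) d" and "finite F" and "F \<subseteq> skew_laurent"
  obtains c where "\<And>m. \<exists>B. finite B
    \<and> pow_space (sl_scale \<iota>) (sl_mult \<sigma>) sl_one (module.span (sl_scale \<iota>) (insert sl_one F)) m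
        \<subseteq> module.span (sl_scale \<iota>) B
    \<and> card B \<le> c * (m + 1) ^ (d + 1)"
proof -
  interpret VF: vector_space "sl_scale \<iota>" by (rule vector_space_sl_scale[OF h\<iota>])
  have hK: "kalg_hom (frac_emb \<iota>)" by (rule kalg_hom_frac_emb[OF h\<iota>])
  interpret VK: vector_space "kscale (frac_emb \<iota>)" by (rule vector_space_kscale[OF hK])
  interpret VKF: vector_space "sl_scale (frac_emb \<iota>)" by (rule vector_space_sl_scale[OF hK])
  let ?pow = "pow_space (sl_scale \<iota>) (sl_mult \<sigma>) sl_one (VF.span (insert sl_one F))"
  obtain N G where "finite G" and pow_box: "\<And>m. ?pow m \<subseteq> sl_box (N * m) (prod_span \<iota> G m)"
    by (rule pow_space_subset_sl_box_prod_span[OF h\<iota> aut la \<open>finite F\<close> \<open>F \<subseteq> skew_laurent\<close>]) blast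
  obtain S where ind: "alg_indep (frac_emb \<iota>) S" and "card S = d"
    and max: "\<forall>y. y \<notin> S \<longrightarrow> \<not> alg_indep (frac_emb \<iota>) (insert y S)"
    using tr by (auto simp: trdeg_eq_def)
  have "finite (to_fract ` G)" using \<open>finite G\<close> by simp
  then obtain C a b T where "C \<noteq> 0" and T: "\<And>m. finite (T m)" "\<And>m. card (T m) \<le> b * (a * m + 1) ^ card S"
    and prods: "\<And>xs. set xs \<subseteq> to_fract ` G \<Longrightarrow> C ^ length xs * prod_list xs \<in> VK.span (T (length xs))"
    by (rule transcendence_basis_span_bound[OF hK ind max]) blast
  show ?thesis
  proof (rule that[of "b * (a + 1) ^ d * (2 * N + 1)"])
    fix m
    let ?\<Phi> = "\<lambda>f n. to_fract (f n) * C ^ m"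
    let ?M = "{sl_monom t i | t i. t \<in> T m \<and> i \<in> {- int (N * m)..int (N * m)}}"
    interpret \<Phi>: Vector_Spaces.linear "sl_scale \<iota>" "sl_scale (frac_emb \<iota>)" ?\<Phi>
      by (rule linear_to_fract_scaled[OF h\<iota>])
    have "?\<Phi> ` sl_box (N * m) (prod_span \<iota> G m) \<subseteq> sl_box (N * m) (VK.span (T m))"
      using to_fract_prod_span_mem[OF h\<iota> prods] by (auto simp: sl_box_def)
    then have img: "?\<Phi> ` ?pow m \<subseteq> VKF.span ?M"
      using pow_box[of m] sl_box_subset_span_monoms[OF hK order_refl] by blast
    have "inj ?\<Phi>" using \<open>C \<noteq> 0\<close> by (intro inj_to_fract_scaled) simp
    then obtain B where B: "finite B" "?pow m \<subseteq> VF.span B" "card B \<le> card ?M"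
      by (rule \<Phi>.finite_basis_if_inj_image_spanned[OF _ img finite_sl_monoms[OF T(1)]]) blast
    have "card ?M \<le> b * (a * m + 1) ^ d * (2 * (N * m) + 1)"
      using card_sl_monoms[OF T(1), of m "N * m"] T(2)[of m] \<open>card S = d\<close>
      by (metis (no_types, lifting) le_trans mult_le_mono1)
    also have "\<dots> \<le> b * (a + 1) ^ d * (2 * N + 1) * (m + 1) ^ (d + 1)"
      using polynomial_growth_bound[of b a m d N] by (simp add: mult.assoc)
    finally show "\<exists>B. finite B \<and> ?pow m \<subseteq> VF.span B
        \<and> card B \<le> b * (a + 1) ^ d * (2 * N + 1) * (m + 1) ^ (d + 1)"
      using B by auto
  qed
qed

lemma common_denominator_ex:
  fixes S :: "'r::idom fract set"
  assumes "finite S"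
  shows "\<exists>b a. b \<noteq> 0 \<and> (\<forall>x\<in>S. to_fract (a x) = x * to_fract b)"
  using assms
proof (induction S rule: finite_induct)
  case empty
  show ?case by (intro exI[of _ 1]) simp
next
  case (insert x S)
  then obtain b a where "b \<noteq> 0" and a: "\<forall>y\<in>S. to_fract (a y) = y * to_fract b" by blast
  obtain p q where x: "x = Fract p q" and "q \<noteq> 0" by (cases x)
  have "x * to_fract (b * q) = to_fract (p * b)"
    using \<open>q \<noteq> 0\<close> by (simp add: x Fract_conv_to_fract)
  moreover have "y * to_fract (b * q) = to_fract (a y * q)" if "y \<in> S" for y
    using a that by simp
  ultimately show ?case
    using \<open>b \<noteq> 0\<close> \<open>q \<noteq> 0\<close>
    by (intro exI[of _ "b * q"] exI[of _ "\<lambda>y. if y = x then p * b else a y * q"]) auto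
qed

lemma common_denominator:
  fixes S :: "'r::idom fract set"
  assumes "finite S"
  obtains b a where "b \<noteq> 0" "\<And>x. x \<in> S \<Longrightarrow> to_fract (a x) = x * to_fract b"
  using common_denominator_ex[OF assms] by blast

primrec sl_power_coeff :: "('r \<Rightarrow> 'r) \<Rightarrow> 'r::comm_ring_1 \<Rightarrow> nat \<Rightarrow> 'r" where
  "sl_power_coeff \<sigma> u 0 = 1"
| "sl_power_coeff \<sigma> u (Suc n) = u * \<sigma> (sl_power_coeff \<sigma> u n)"

lemma foldr_sl_mult_replicate_monom:
  assumes "k_aut \<iota> \<sigma>"
  shows "foldr (sl_mult \<sigma>) (replicate n (sl_monom u 1)) sl_one = sl_monom (sl_power_coeff \<sigma> u n) (int n)"
  by (induction n) (simp_all add: sl_one_eq_monom sl_mult_monom[OF assms] add.commute)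

lemma sl_power_coeff_nonzero:
  fixes u :: "'r::idom"
  assumes "k_aut \<iota> \<sigma>" and "u \<noteq> 0"
  shows "sl_power_coeff \<sigma> u n \<noteq> 0"
  using assms kalg_mono_eq_zero_iff[OF k_aut_imp_kalg_mono[OF assms(1)]] by (induction n) simp_all

lemma foldr_sl_mult_degree_zero:
  assumes "k_aut \<iota> \<sigma>"
  shows "foldr (sl_mult \<sigma>) (map (\<lambda>a. sl_monom a 0) as) (sl_monom c j) = sl_monom (prod_list as * c) j"
  by (induction as) (simp_all add: sl_mult_monom[OF assms] mult.assoc)

lemma foldr_sl_mult_replicate_one:
  assumes "k_aut \<iota> \<sigma>"
  shows "foldr (sl_mult \<sigma>) (replicate r sl_one) (sl_monom c j) = sl_monom c j"
  by (induction r) (simp_all add: sl_one_eq_monom sl_mult_monom[OF assms])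

context
  fixes \<phi> :: "'k::field \<Rightarrow> 'a::comm_ring_1"
  assumes h\<phi>: "kalg_hom \<phi>"
begin

interpretation VF: vector_space "sl_scale \<phi>" by (rule vector_space_sl_scale[OF h\<phi>])

lemma independent_family_nonzero_inj:
  assumes "finite \<Gamma>" and ind: "\<And>c. (\<Sum>\<gamma>\<in>\<Gamma>. \<phi> (c \<gamma>) * a \<gamma>) = 0 \<Longrightarrow> \<forall>\<gamma>\<in>\<Gamma>. c \<gamma> = 0"
  shows "\<And>\<gamma>. \<gamma> \<in> \<Gamma> \<Longrightarrow> a \<gamma> \<noteq> 0" and "inj_on a \<Gamma>"
proof -
  have \<phi>: "\<phi> 0 = 0" "\<phi> 1 = 1" "\<phi> (- 1) = - 1"
    using kalg_hom_zero[OF h\<phi>] kalg_hom_uminus_one[OF h\<phi>] h\<phi> by (simp_all add: kalg_hom_def)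
  show "a \<gamma> \<noteq> 0" if "\<gamma> \<in> \<Gamma>" for \<gamma>
  proof
    assume "a \<gamma> = 0"
    have "(\<Sum>\<delta>\<in>\<Gamma>. \<phi> (if \<delta> = \<gamma> then 1 else 0) * a \<delta>) = 0"
      by (rule sum.neutral) (use \<open>a \<gamma> = 0\<close> \<phi> in auto)
    then show False using ind that by fastforce
  qed
  show "inj_on a \<Gamma>"
  proof (rule inj_onI, rule ccontr)
    fix \<gamma> \<gamma>' assume "\<gamma> \<in> \<Gamma>" "\<gamma>' \<in> \<Gamma>" "a \<gamma> = a \<gamma>'" "\<gamma> \<noteq> \<gamma>'"
    define c :: "_ \<Rightarrow> 'k" where "c \<delta> = (if \<delta> = \<gamma> then 1 else if \<delta> = \<gamma>' then - 1 else 0)" for \<delta>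
    have "\<phi> (c \<delta>) * a \<delta> = (if \<delta> = \<gamma> then a \<delta> else 0) - (if \<delta> = \<gamma>' then a \<delta> else 0)" for \<delta>
      using \<phi> \<open>\<gamma> \<noteq> \<gamma>'\<close> by (simp add: c_def)
    then have "(\<Sum>\<delta>\<in>\<Gamma>. \<phi> (c \<delta>) * a \<delta>) = a \<gamma> - a \<gamma>'"
      using \<open>finite \<Gamma>\<close> \<open>\<gamma> \<in> \<Gamma>\<close> \<open>\<gamma>' \<in> \<Gamma>\<close> by (simp add: sum_subtractf)
    then have "c \<gamma> = 0" using ind \<open>a \<gamma> = a \<gamma>'\<close> \<open>\<gamma> \<in> \<Gamma>\<close> by simp
    then show False by (simp add: c_def)
  qed
qed

lemma independent_sl_monom_family:
  assumes "finite I" and "finite \<Gamma>"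
    and ind: "\<And>n c. n \<in> I \<Longrightarrow> (\<Sum>\<gamma>\<in>\<Gamma>. \<phi> (c \<gamma>) * a n \<gamma>) = 0 \<Longrightarrow> \<forall>\<gamma>\<in>\<Gamma>. c \<gamma> = 0"
  shows "inj_on (\<lambda>(n, \<gamma>). sl_monom (a n \<gamma>) n) (I \<times> \<Gamma>)"
    and "VF.independent ((\<lambda>(n, \<gamma>). sl_monom (a n \<gamma>) n) ` (I \<times> \<Gamma>))"
proof -
  let ?\<psi> = "\<lambda>(n, \<gamma>). sl_monom (a n \<gamma>) n"
  have nz: "a n \<gamma> \<noteq> 0" and inj: "inj_on (a n) \<Gamma>" if "n \<in> I" "\<gamma> \<in> \<Gamma>" for n \<gamma>
    using independent_family_nonzero_inj[OF \<open>finite \<Gamma>\<close> ind[OF that(1)]] that(2) by auto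
  show inj\<psi>: "inj_on ?\<psi> (I \<times> \<Gamma>)"
  proof (rule inj_onI, clarify)
    fix n \<gamma> n' \<gamma>' assume mem: "n \<in> I" "\<gamma> \<in> \<Gamma>" "n' \<in> I" "\<gamma>' \<in> \<Gamma>"
      and eq: "sl_monom (a n \<gamma>) n = sl_monom (a n' \<gamma>') n'"
    have "a n \<gamma> = (if n' = n then a n' \<gamma>' else 0)"
      using fun_cong[OF eq, of n] by (simp add: sl_monom_def)
    then have "n' = n" "a n \<gamma> = a n \<gamma>'" using nz[OF mem(1,2)] by (auto split: if_splits)
    then show "n = n' \<and> \<gamma> = \<gamma>'" using inj_onD[OF inj[OF mem(1,2)]] mem by auto
  qed
  show "VF.independent (?\<psi> ` (I \<times> \<Gamma>))"
  proof (rule VF.independent_if_scalars_zero)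
    show "finite (?\<psi> ` (I \<times> \<Gamma>))" using assms(1,2) by simp
  next
    fix f v assume zero: "(\<Sum>x\<in>?\<psi> ` (I \<times> \<Gamma>). sl_scale \<phi> (f x) x) = 0" and "v \<in> ?\<psi> ` (I \<times> \<Gamma>)"
    then obtain n0 \<gamma>0 where v: "v = sl_monom (a n0 \<gamma>0) n0" "n0 \<in> I" "\<gamma>0 \<in> \<Gamma>" by auto
    have at_n0: "sl_scale \<phi> (f (?\<psi> (n, \<gamma>))) (?\<psi> (n, \<gamma>)) n0
        = (if n = n0 then \<phi> (f (sl_monom (a n0 \<gamma>) n0)) * a n0 \<gamma> else 0)" for n \<gamma>
      by (cases "n = n0") (simp_all add: sl_scale_def sl_monom_def)
    have "0 = (\<Sum>p\<in>I \<times> \<Gamma>. sl_scale \<phi> (f (?\<psi> p)) (?\<psi> p)) n0"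
      using zero by (simp add: sum.reindex[OF inj\<psi>])
    also have "\<dots> = (\<Sum>n\<in>I. \<Sum>\<gamma>\<in>\<Gamma>. sl_scale \<phi> (f (?\<psi> (n, \<gamma>))) (?\<psi> (n, \<gamma>)) n0)"
      by (simp add: sum_fun_apply sum.cartesian_product split_def)
    also have "\<dots> = (\<Sum>n\<in>I. if n = n0 then \<Sum>\<gamma>\<in>\<Gamma>. \<phi> (f (sl_monom (a n0 \<gamma>) n0)) * a n0 \<gamma> else 0)"
      unfolding at_n0 by (intro sum.cong) auto
    also have "\<dots> = (\<Sum>\<gamma>\<in>\<Gamma>. \<phi> (f (sl_monom (a n0 \<gamma>) n0)) * a n0 \<gamma>)"
      using \<open>finite I\<close> \<open>n0 \<in> I\<close> by simp
    finally show "f v = 0"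
      using ind[OF v(2), of "\<lambda>\<gamma>. f (sl_monom (a n0 \<gamma>) n0)"] v by simp
  qed
qed

end

locale lower_bound_data =
  fixes \<iota> :: "'k::field \<Rightarrow> 'r::idom" and \<sigma> :: "'r \<Rightarrow> 'r" and S :: "'r fract set"
    and b :: 'r and a :: "'r fract \<Rightarrow> 'r" and u :: 'r and xs :: "'r fract list"
  assumes kalg: "kalg_hom \<iota>" and aut: "k_aut \<iota> \<sigma>" and ind: "alg_indep (frac_emb \<iota>) S"
    and b_nonzero: "b \<noteq> 0" and to_fract_a: "\<And>x. x \<in> S \<Longrightarrow> to_fract (a x) = x * to_fract b"
    and u_nonzero: "u \<noteq> 0" and set_xs: "set xs = S" and distinct_xs: "distinct xs"
begin

interpretation VF: vector_space "sl_scale \<iota>" by (rule vector_space_sl_scale[OF kalg])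

definition gens :: "(int \<Rightarrow> 'r) set" where
  "gens = insert (sl_monom b 0) (insert (sl_monom u 1) ((\<lambda>x. sl_monom (a x) 0) ` S))"

text \<open>The monomial \<open>b ^ (D - |\<gamma>|) * \<Prod>x\<in>S. a x ^ \<gamma> x\<close>, kept as a list of \<open>D\<close> factors so that it is
  visibly a product of \<open>D\<close> generators.\<close>
definition mono_list :: "nat \<Rightarrow> ('r fract \<Rightarrow> nat) \<Rightarrow> 'r list" where
  "mono_list D \<gamma> = concat (map (\<lambda>x. replicate (\<gamma> x) (a x)) xs) @ replicate (D - sum \<gamma> S) b"

lemma finite_S: "finite S"
  using ind by (simp add: alg_indep_def)

lemma length_mono_list: "sum \<gamma> S \<le> D \<Longrightarrow> length (mono_list D \<gamma>) = D"
  using sum.distinct_set_conv_list[OF distinct_xs, of \<gamma>] set_xs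
  by (simp add: mono_list_def length_concat comp_def)

lemma set_mono_list: "set (mono_list D \<gamma>) \<subseteq> insert b (a ` S)"
  using set_xs by (auto simp: mono_list_def)

lemma to_fract_prod_mono_list:
  assumes "sum \<gamma> S \<le> D"
  shows "to_fract (prod_list (mono_list D \<gamma>)) = to_fract b ^ D * power_prod S \<gamma>"
proof -
  have "prod_list (concat (map (\<lambda>x. replicate (\<gamma> x) (a x)) xs)) = (\<Prod>x\<in>S. a x ^ \<gamma> x)"
  proof -
    have "prod_list (concat (map (\<lambda>x. replicate (\<gamma> x) (a x)) ys)) = prod_list (map (\<lambda>x. a x ^ \<gamma> x) ys)"
      for ys by (induction ys) simp_all
    then show ?thesis
      using prod.distinct_set_conv_list[OF distinct_xs, of "\<lambda>x. a x ^ \<gamma> x"] set_xs by simp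
  qed
  then have "to_fract (prod_list (mono_list D \<gamma>))
      = (\<Prod>x\<in>S. to_fract (a x) ^ \<gamma> x) * to_fract b ^ (D - sum \<gamma> S)"
    by (simp add: mono_list_def to_fract_prod_list)
  also have "(\<Prod>x\<in>S. to_fract (a x) ^ \<gamma> x) = power_prod S \<gamma> * to_fract b ^ sum \<gamma> S"
    by (simp add: to_fract_a power_mult_distrib prod.distrib power_sum power_prod_def)
  finally show ?thesis
    using assms by (simp add: mult_ac flip: power_add)
qed

definition family_elem :: "nat \<Rightarrow> int \<Rightarrow> ('r fract \<Rightarrow> nat) \<Rightarrow> int \<Rightarrow> 'r" where
  "family_elem D n \<gamma> = sl_monom (prod_list (mono_list D \<gamma>) * sl_power_coeff \<sigma> u (nat n)) n"

lemma family_elem_mem_pow_space: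
  assumes "sum \<gamma> S \<le> D" and "0 \<le> n" and "D + nat n \<le> m"
  shows "family_elem D n \<gamma> \<in> pow_space (sl_scale \<iota>) (sl_mult \<sigma>) sl_one (VF.span (insert sl_one gens)) m"
proof -
  define L where "L = map (\<lambda>c. sl_monom c 0) (mono_list D \<gamma>) @ replicate (nat n) (sl_monom u 1)
    @ replicate (m - D - nat n) sl_one"
  have "length L = m"
    using length_mono_list[OF assms(1)] assms(3) by (simp add: L_def)
  moreover have "set L \<subseteq> VF.span (insert sl_one gens)"
    using set_mono_list[of D \<gamma>] VF.span_superset by (fastforce simp: L_def gens_def)
  moreover have "foldr (sl_mult \<sigma>) L sl_one = family_elem D n \<gamma>"
  proof -
    have one: "foldr (sl_mult \<sigma>) (replicate r sl_one) sl_one = sl_one" for r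
      using foldr_sl_mult_replicate_one[OF aut, of r 1 0] unfolding sl_one_eq_monom .
    have "foldr (sl_mult \<sigma>) L sl_one = foldr (sl_mult \<sigma>) (map (\<lambda>c. sl_monom c 0) (mono_list D \<gamma>))
        (foldr (sl_mult \<sigma>) (replicate (nat n) (sl_monom u 1)) sl_one)"
      by (simp only: L_def foldr_append o_apply one)
    also have "\<dots> = sl_monom (prod_list (mono_list D \<gamma>) * sl_power_coeff \<sigma> u (nat n)) (int (nat n))"
      by (simp only: foldr_sl_mult_replicate_monom[OF aut] foldr_sl_mult_degree_zero[OF aut])
    finally show ?thesis using assms(2) by (simp add: family_elem_def)
  qed
  ultimately show ?thesis
    unfolding pow_space_def by (intro VF.span_base CollectI exI[of _ L]) simp
qed

lemma family_elem_independent: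
  assumes "finite I" and "finite \<Gamma>" and "\<Gamma> \<subseteq> degree_le_exps S D"
  shows "inj_on (\<lambda>(n, \<gamma>). family_elem D n \<gamma>) (I \<times> \<Gamma>)"
    and "VF.independent ((\<lambda>(n, \<gamma>). family_elem D n \<gamma>) ` (I \<times> \<Gamma>))"
proof -
  have "\<forall>\<gamma>\<in>\<Gamma>. c \<gamma> = 0"
    if "n \<in> I" and zero: "(\<Sum>\<gamma>\<in>\<Gamma>. \<iota> (c \<gamma>) * (prod_list (mono_list D \<gamma>) * sl_power_coeff \<sigma> u (nat n))) = 0" for n c
  proof (rule alg_indep_power_prod[OF ind \<open>finite \<Gamma>\<close>])
    show "\<forall>\<gamma>\<in>\<Gamma>. \<forall>x. x \<notin> S \<longrightarrow> \<gamma> x = 0"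
      using assms(3) by (auto simp: degree_le_exps_def)
    have "(\<Sum>\<gamma>\<in>\<Gamma>. \<iota> (c \<gamma>) * prod_list (mono_list D \<gamma>)) * sl_power_coeff \<sigma> u (nat n) = 0"
      using zero by (simp add: sum_distrib_right mult.assoc)
    then have "to_fract (\<Sum>\<gamma>\<in>\<Gamma>. \<iota> (c \<gamma>) * prod_list (mono_list D \<gamma>)) = 0"
      using sl_power_coeff_nonzero[OF aut u_nonzero] by simp
    moreover have "\<gamma> \<in> \<Gamma> \<Longrightarrow> sum \<gamma> S \<le> D" for \<gamma>
      using assms(3) by (auto simp: degree_le_exps_def)
    ultimately have "to_fract b ^ D * (\<Sum>\<gamma>\<in>\<Gamma>. frac_emb \<iota> (c \<gamma>) * power_prod S \<gamma>) = 0"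
      by (simp add: to_fract_prod_mono_list frac_emb_conv_to_fract sum_distrib_left mult_ac)
    then show "(\<Sum>\<gamma>\<in>\<Gamma>. frac_emb \<iota> (c \<gamma>) * power_prod S \<gamma>) = 0"
      using b_nonzero by simp
  qed
  note family = independent_sl_monom_family[OF kalg assms(1,2) this]
  show "inj_on (\<lambda>(n, \<gamma>). family_elem D n \<gamma>) (I \<times> \<Gamma>)"
    unfolding family_elem_def by (rule family(1))
  show "VF.independent ((\<lambda>(n, \<gamma>). family_elem D n \<gamma>) ` (I \<times> \<Gamma>))"
    unfolding family_elem_def by (rule family(2))
qed

lemma box_exps_subset_degree_le_exps: "box_exps S q \<subseteq> degree_le_exps S (card S * q)"
proof
  fix \<gamma> assume "\<gamma> \<in> box_exps S q"
  then have "sum \<gamma> S \<le> sum (\<lambda>_. q) S" by (intro sum_mono) (auto simp: box_exps_def)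
  with \<open>\<gamma> \<in> box_exps S q\<close> show "\<gamma> \<in> degree_le_exps S (card S * q)"
    by (simp add: box_exps_def degree_le_exps_def)
qed

lemma independent_in_pow_space:
  assumes "(card S + 1) * q \<le> m"
  shows "\<exists>T. T \<subseteq> pow_space (sl_scale \<iota>) (sl_mult \<sigma>) sl_one (VF.span (insert sl_one gens)) m
    \<and> VF.independent T \<and> card T = (q + 1) ^ (card S + 1)"
proof (intro exI conjI)
  let ?I = "int ` {..q}" and ?\<Gamma> = "box_exps S q" and ?D = "card S * q"
  let ?T = "(\<lambda>(n, \<gamma>). family_elem ?D n \<gamma>) ` (?I \<times> ?\<Gamma>)"
  note family = family_elem_independent[OF _ finite_box_exps[OF finite_S] box_exps_subset_degree_le_exps]
  show "VF.independent ?T" by (rule family(2)) simp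
  have "card ?T = card ?I * card ?\<Gamma>"
    using family(1)[of ?I] by (simp add: card_image card_cartesian_product)
  then show "card ?T = (q + 1) ^ (card S + 1)"
    by (simp add: card_image card_box_exps[OF finite_S])
  show "?T \<subseteq> pow_space (sl_scale \<iota>) (sl_mult \<sigma>) sl_one (VF.span (insert sl_one gens)) m"
    using assms box_exps_subset_degree_le_exps
    by (auto simp: degree_le_exps_def intro!: family_elem_mem_pow_space)
qed

end

lemma BR_independent_lower_bound:
  fixes \<iota> :: "'k::field \<Rightarrow> 'r::idom"
  assumes h\<iota>: "kalg_hom \<iota>" and aut: "k_aut \<iota> \<sigma>" and tr: "trdeg_eq (frac_emb \<iota>) d"
    and BR_nonzero: "\<forall>n. BR_I \<sigma> H J n \<noteq> {0}"
  obtains F where "finite F" "F \<subseteq> BR_alg \<sigma> H J"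
    "\<And>m. \<exists>T. T \<subseteq> pow_space (sl_scale \<iota>) (sl_mult \<sigma>) sl_one (module.span (sl_scale \<iota>) (insert sl_one F)) m
      \<and> module.independent (sl_scale \<iota>) T \<and> card T = (m div (d + 1) + 1) ^ (d + 1)"
proof -
  obtain S where ind: "alg_indep (frac_emb \<iota>) S" and "card S = d"
    using tr by (auto simp: trdeg_eq_def)
  then have "finite S" by (simp add: alg_indep_def)
  then obtain b a where "b \<noteq> 0" "\<And>x. x \<in> S \<Longrightarrow> to_fract (a x) = x * to_fract b"
    by (rule common_denominator) blast
  moreover obtain u where "u \<in> BR_I \<sigma> H J 1" "u \<noteq> 0"
    using BR_nonzero zero_mem_BR_I[of \<sigma> H J 1] by blast
  moreover obtain xs where "set xs = S" "distinct xs"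
    using finite_distinct_list[OF \<open>finite S\<close>] by blast
  ultimately interpret lower_bound_data \<iota> \<sigma> S b a u xs
    using h\<iota> aut ind by unfold_locales auto
  have "gens \<subseteq> BR_alg \<sigma> H J"
    using \<open>u \<in> BR_I \<sigma> H J 1\<close> by (auto simp: gens_def BR_I_def intro!: sl_monom_mem_BR_alg)
  moreover have "(card S + 1) * (m div (d + 1)) \<le> m" for m
    using \<open>card S = d\<close> by (metis div_times_less_eq_dividend mult.commute)
  ultimately show ?thesis
    using that[of gens] independent_in_pow_space \<open>card S = d\<close> finite_S by (simp add: gens_def)
qed

lemma tendsto_const_div_ln: "((\<lambda>m::nat. K / ln (real m)) \<longlongrightarrow> 0) sequentially"
  by (rule tendsto_divide_0[OF tendsto_const])
    (rule filterlim_at_top_imp_at_infinity, rule filterlim_compose[OF ln_at_top filterlim_real_sequentially])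

lemma limsup_ratio_ln_le:
  fixes f :: "nat \<Rightarrow> real"
  assumes "eventually (\<lambda>m. f m \<le> K + k * ln (real m)) sequentially"
  shows "limsup (\<lambda>m. ereal (f m / ln (real m))) \<le> ereal k"
proof -
  have "eventually (\<lambda>m. ereal (f m / ln (real m)) \<le> ereal (k + K / ln (real m))) sequentially"
    using assms eventually_gt_at_top[of 1]
  proof eventually_elim
    case (elim m)
    then have "0 < ln (real m)" by simp
    then have "f m / ln (real m) \<le> (K + k * ln (real m)) / ln (real m)"
      using elim by (intro divide_right_mono) simp_all
    also have "\<dots> = k + K / ln (real m)"
      using \<open>0 < ln (real m)\<close> by (simp add: field_simps)
    finally show ?case by simp
  qed
  then have "limsup (\<lambda>m. ereal (f m / ln (real m))) \<le> limsup (\<lambda>m. ereal (k + K / ln (real m)))"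
    by (rule Limsup_mono)
  also have "\<dots> = ereal k"
    using tendsto_add[OF tendsto_const tendsto_const_div_ln, of k K]
    by (intro lim_imp_Limsup) simp_all
  finally show ?thesis .
qed

lemma limsup_ratio_ln_ge:
  fixes f :: "nat \<Rightarrow> real"
  assumes "eventually (\<lambda>m. k * ln (real m) - K \<le> f m) sequentially"
  shows "ereal k \<le> limsup (\<lambda>m. ereal (f m / ln (real m)))"
proof -
  have "eventually (\<lambda>m. ereal (k + (- K) / ln (real m)) \<le> ereal (f m / ln (real m))) sequentially"
    using assms eventually_gt_at_top[of 1]
  proof eventually_elim
    case (elim m)
    then have "0 < ln (real m)" by simp
    have "k + (- K) / ln (real m) = (k * ln (real m) - K) / ln (real m)"
      using \<open>0 < ln (real m)\<close> by (simp add: field_simps)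
    also have "\<dots> \<le> f m / ln (real m)"
      using elim \<open>0 < ln (real m)\<close> by (intro divide_right_mono) simp_all
    finally show ?case by simp
  qed
  then have "limsup (\<lambda>m. ereal (k + (- K) / ln (real m))) \<le> limsup (\<lambda>m. ereal (f m / ln (real m)))"
    by (rule Limsup_mono)
  moreover have "limsup (\<lambda>m. ereal (k + (- K) / ln (real m))) = ereal k"
    using tendsto_add[OF tendsto_const tendsto_const_div_ln, of k "- K"]
    by (intro lim_imp_Limsup) simp_all
  ultimately show ?thesis by simp
qed

lemma ln_le_of_poly_bound:
  assumes "2 \<le> m" and "D \<le> c * (m + 1) ^ k"
  shows "ln (real D) \<le> (ln (real c + 1) + real k) + real k * ln (real m)"
proof -
  have "1 * 1 \<le> (real c + 1) * (real m + 1) ^ k"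
    by (intro mult_mono) simp_all
  then have one: "1 \<le> (real c + 1) * (real m + 1) ^ k" by simp
  have "real D \<le> real c * (real m + 1) ^ k"
    using of_nat_mono[OF assms(2)] by (simp add: add.commute)
  also have "\<dots> \<le> (real c + 1) * (real m + 1) ^ k"
    by (intro mult_right_mono) simp_all
  finally have "ln (real D) \<le> ln ((real c + 1) * (real m + 1) ^ k)"
    using ln_ge_zero[OF one] by (cases "D = 0") (simp_all add: ln_mono)
  also have "\<dots> = ln (real c + 1) + real k * ln (real m + 1)"
    by (simp add: ln_mult ln_realpow)
  also have "real k * ln (real m + 1) \<le> real k * (1 + ln (real m))"
  proof (intro mult_left_mono)
    have "ln (real m + 1) \<le> ln (2 * real m)" using assms(1) by simp
    also have "\<dots> = ln 2 + ln (real m)" using assms(1) by (simp add: ln_mult)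
    finally show "ln (real m + 1) \<le> 1 + ln (real m)" using ln_2_less_1 by simp
  qed simp
  finally show ?thesis by (simp add: algebra_simps)
qed

lemma ln_ge_of_div_power_bound:
  assumes "1 \<le> k" and "2 \<le> m" and "(m div k + 1) ^ k \<le> D"
  shows "real k * ln (real m) - real k * ln (real k) \<le> ln (real D)"
proof -
  have "m mod k < k" "m div k * k + m mod k = m"
    using assms(1) by simp_all
  then have "m \<le> m div k * k + k" by linarith
  then have "m \<le> (m div k + 1) * k" by (simp add: algebra_simps)
  then have "real m \<le> real (m div k + 1) * real k"
    by (metis of_nat_mono of_nat_mult)
  then have "ln (real m / real k) \<le> ln (real (m div k + 1))"
    using assms(1,2) by (simp add: divide_le_eq)
  then have "real k * (ln (real m) - ln (real k)) \<le> ln (real ((m div k + 1) ^ k))"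
    using assms(1,2) by (simp add: ln_div ln_realpow)
  also have "\<dots> \<le> ln (real D)"
    using assms(3) by (intro ln_mono of_nat_mono) simp_all
  finally show ?thesis by (simp add: right_diff_distrib)
qed

lemma (in vector_space) card_le_dim_if_finite_span:
  assumes "finite W" and "V \<subseteq> span W" and "T \<subseteq> V" and "independent T"
  shows "card T \<le> dim V"
proof -
  obtain B where B: "B \<subseteq> V" "independent B" "V \<subseteq> span B" "card B = dim V"
    by (rule basis_exists)
  then have "finite B"
    using independent_span_bound[OF assms(1) B(2)] assms(2) by blast
  then show ?thesis
    using independent_span_bound[OF _ assms(4)] assms(3) B by fastforce
qed

definition pow_growth :: "('k::field \<Rightarrow> 'a::ab_group_add \<Rightarrow> 'a) \<Rightarrow> ('a \<Rightarrow> 'a \<Rightarrow> 'a) \<Rightarrow> 'a \<Rightarrow> 'a set \<Rightarrow> ereal" where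
  "pow_growth sc mul one F = limsup (\<lambda>m. ereal (ln (real (vector_space.dim sc
     (pow_space sc mul one (module.span sc (insert one F)) m))) / ln (real m)))"

lemma GKdim_eq_SUP_pow_growth:
  "GKdim sc mul one A = (SUP F\<in>{F. finite F \<and> F \<subseteq> A}. pow_growth sc mul one F)"
  by (simp add: GKdim_def pow_growth_def)

lemma pow_space_growth_le:
  fixes \<iota> :: "'k::field \<Rightarrow> 'r::idom"
  assumes "kalg_hom \<iota>" and "k_aut \<iota> \<sigma>" and "locally_algebraic \<iota> \<sigma>"
    and "trdeg_eq (frac_emb \<iota>) d" and "finite F" and "F \<subseteq> skew_laurent"
  shows "pow_growth (sl_scale \<iota>) (sl_mult \<sigma>) sl_one F \<le> ereal (real d + 1)"
proof -
  interpret VF: vector_space "sl_scale \<iota>" by (rule vector_space_sl_scale[OF assms(1)])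
  obtain c where "\<And>m. \<exists>B. finite B \<and> pow_space (sl_scale \<iota>) (sl_mult \<sigma>) sl_one (VF.span (insert sl_one F)) m
      \<subseteq> VF.span B \<and> card B \<le> c * (m + 1) ^ (d + 1)"
    by (rule pow_space_finite_span_bound[OF assms]) blast
  then have dim_le: "VF.dim (pow_space (sl_scale \<iota>) (sl_mult \<sigma>) sl_one (VF.span (insert sl_one F)) m)
      \<le> c * (m + 1) ^ (d + 1)" for m
    by (meson VF.dim_le_card le_trans)
  have "eventually (\<lambda>m. ln (real (VF.dim (pow_space (sl_scale \<iota>) (sl_mult \<sigma>) sl_one
      (VF.span (insert sl_one F)) m))) \<le> (ln (real c + 1) + real (d + 1)) + real (d + 1) * ln (real m)) sequentially"
    by (rule eventually_sequentiallyI[of 2], rule ln_le_of_poly_bound, assumption, rule dim_le)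
  from limsup_ratio_ln_le[OF this] show ?thesis by (simp add: pow_growth_def add.commute)
qed

lemma BR_pow_space_growth_ge:
  fixes \<iota> :: "'k::field \<Rightarrow> 'r::idom"
  assumes "kalg_hom \<iota>" and "k_aut \<iota> \<sigma>" and "locally_algebraic \<iota> \<sigma>"
    and "trdeg_eq (frac_emb \<iota>) d" and "\<forall>n. BR_I \<sigma> H J n \<noteq> {0}"
  obtains F where "finite F" "F \<subseteq> BR_alg \<sigma> H J"
    "ereal (real d + 1) \<le> pow_growth (sl_scale \<iota>) (sl_mult \<sigma>) sl_one F"
proof -
  interpret VF: vector_space "sl_scale \<iota>" by (rule vector_space_sl_scale[OF assms(1)])
  obtain F where F: "finite F" "F \<subseteq> BR_alg \<sigma> H J" and independent:
    "\<And>m. \<exists>T. T \<subseteq> pow_space (sl_scale \<iota>) (sl_mult \<sigma>) sl_one (VF.span (insert sl_one F)) m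
      \<and> VF.independent T \<and> card T = (m div (d + 1) + 1) ^ (d + 1)"
    by (rule BR_independent_lower_bound[OF assms(1,2,4,5)]) blast
  have "F \<subseteq> skew_laurent" using F(2) by (auto simp: BR_alg_def)
  then obtain c where spanned: "\<And>m. \<exists>B. finite B
      \<and> pow_space (sl_scale \<iota>) (sl_mult \<sigma>) sl_one (VF.span (insert sl_one F)) m \<subseteq> VF.span B
      \<and> card B \<le> c * (m + 1) ^ (d + 1)"
    by (rule pow_space_finite_span_bound[OF assms(1-4) F(1)]) blast
  have dim_ge: "(m div (d + 1) + 1) ^ (d + 1)
      \<le> VF.dim (pow_space (sl_scale \<iota>) (sl_mult \<sigma>) sl_one (VF.span (insert sl_one F)) m)" for m
    using independent[of m] spanned[of m] VF.card_le_dim_if_finite_span by metis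
  have "eventually (\<lambda>m. real (d + 1) * ln (real m) - real (d + 1) * ln (real (d + 1))
      \<le> ln (real (VF.dim (pow_space (sl_scale \<iota>) (sl_mult \<sigma>) sl_one (VF.span (insert sl_one F)) m))))
      sequentially"
    by (rule eventually_sequentiallyI[of 2], rule ln_ge_of_div_power_bound, simp, assumption, rule dim_ge)
  from limsup_ratio_ln_ge[OF this] show ?thesis
    using that F by (simp add: pow_growth_def add.commute)
qed

theorem proposition2p2:
  fixes \<iota> :: "'k::field \<Rightarrow> 'r::idom" and \<sigma> :: "'r \<Rightarrow> 'r" and H J :: "'r set" and d :: nat
  assumes "alg_closed TYPE('k)"
    and "kalg_hom \<iota>"
    and "noetherian_ring TYPE('r)"
    and "trdeg_eq (frac_emb \<iota>) d"
    and "k_aut \<iota> \<sigma>"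
    and "locally_algebraic \<iota> \<sigma>"
    and "is_ideal H" and "is_ideal J"
    and "\<forall>n. BR_I \<sigma> H J n \<noteq> {0}"
  shows "GKdim (sl_scale \<iota>) (sl_mult \<sigma>) sl_one (BR_alg \<sigma> H J) = ereal (real d + 1)"
proof -
  note setting = assms(2,5,6,4)
  obtain F0 where "finite F0" "F0 \<subseteq> BR_alg \<sigma> H J"
    and "ereal (real d + 1) \<le> pow_growth (sl_scale \<iota>) (sl_mult \<sigma>) sl_one F0"
    by (rule BR_pow_space_growth_ge[OF setting assms(9)]) blast
  then have "ereal (real d + 1) \<le> GKdim (sl_scale \<iota>) (sl_mult \<sigma>) sl_one (BR_alg \<sigma> H J)"
    unfolding GKdim_eq_SUP_pow_growth by (intro order_trans[OF _ SUP_upper]) simp_all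
  moreover have "GKdim (sl_scale \<iota>) (sl_mult \<sigma>) sl_one (BR_alg \<sigma> H J) \<le> ereal (real d + 1)"
    unfolding GKdim_eq_SUP_pow_growth
    by (intro SUP_least pow_space_growth_le[OF setting]) (auto simp: BR_alg_def)
  ultimately show ?thesis by (rule antisym[rotated])
qed

end
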